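(* Let $K$ be a field, $Q$ the bipartite type $A$ quiver with vertices $y_0,x_1,\dots,x_n,y_n$ and arrows $\alpha_i\colon x_i\to y_{i-1}$, $\beta_i\colon x_i\to y_i$, $\mathbf{d}$ a dimension vector, and $\mathbf{r}$ a quiver rank array. A matrix $Z\in Y^{\mathbf{w}}_\circ$ satisfies $\operatorname{rank}Z_{i\times j}=\mathbf{b}(\mathbf{r})_{i,j}$ for all $1\le i,j\le 2n+1$ if and only if $Z=\zeta(V)$ for some $V\in\mathrm{rep}_Q(\mathbf{d})$ satisfying $\mathbf{r}$.
   Context: $\mathrm{rep}_Q(\mathbf{d})$: tuples $V=(V_a)$, $V_a\in\mathrm{Mat}_{\mathbf{d}(ha)\times\mathbf{d}(ta)}(K)$, with $\mathbf{GL}(\mathbf{d})$ acting by $g\cdot V=(g_{ha}V_ag_{ta}^{-1})$. Intervals are nonempty sets of consecutive vertices with the arrows between them. $M_Q(V)$ is the block matrix with block rows $y_0,\dots,y_n$ and block columns $x_n,\dots,x_1$, $V_{\alpha_i}$ in block $(y_{i-1},x_i)$, $V_{\beta_i}$ in block $(y_i,x_i)$, zeros elsewhere; $M_J(V)$ is its submatrix on the block rows of the $y$-vertices in $J$ and block columns of the $x$-vertices in $J$; $r_J(V)=\operatorname{rank}M_J(V)$. A quiver rank array is a function $\mathbf{r}$ on intervals such that some $V$ has $r_J(V)=\mathbf{r}_J$ for all $J$ ("$V$ satisfies $\mathbf{r}$"); $\mathcal{O}_\mathbf{r}$ is the set of such $V$. $d_x=\sum\mathbf{d}(x_i)$, $d_y=\sum\mathbf{d}(y_i)$,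 $d=d_x+d_y$; $Y^{\mathbf{w}}_\circ$ is the set of $d\times d$ matrices $\begin{pmatrix}*&\mathbf{1}_{d_y}\\ \mathbf{1}_{d_x}&0\end{pmatrix}$; $\zeta(V)=\begin{pmatrix}M_Q(V)&\mathbf{1}_{d_y}\\ \mathbf{1}_{d_x}&0\end{pmatrix}$. Row blocks have sizes $\mathbf{d}(y_0),\dots,\mathbf{d}(y_n),\mathbf{d}(x_n),\dots,\mathbf{d}(x_1)$, column blocks sizes $\mathbf{d}(x_n),\dots,\mathbf{d}(x_1),\mathbf{d}(y_0),\dots,\mathbf{d}(y_n)$, numbered $1..2n+1$; $Z_{i\times j}$ is the submatrix of block rows $1..i$ and block columns $1..j$. $\mathbf{b}(\mathbf{r})_{i,j}=\operatorname{rank}\zeta(V)_{i\times j}$ for any $V\in\mathcal{O}_\mathbf{r}$ (independent of the choice). *)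

theory Defs
  imports "Jordan_Normal_Form.DL_Rank_Submatrix"
begin

text \<open>Bipartite type A quiver with vertices y_0, x_1, y_1, ..., x_n, y_n (in this linear order,
  position 2i = y_i, position 2i-1 = x_i), arrows alpha_i : x_i -> y_(i-1), beta_i : x_i -> y_i.
  A dimension vector is given by dx i = d(x_i) (1 <= i <= n) and dy i = d(y_i) (0 <= i <= n).
  A representation V is a pair (Va, Vb) with Va i = V_alpha_i and Vb i = V_beta_i.\<close>

type_synonym 'a qrep = "(nat \<Rightarrow> 'a mat) \<times> (nat \<Rightarrow> 'a mat)"

definition mrank :: "'a::field mat \<Rightarrow> nat" where
  "mrank A = vec_space.rank (dim_row A) A"

definition rep :: "nat \<Rightarrow> (nat \<Rightarrow> nat) \<Rightarrow> (nat \<Rightarrow> nat) \<Rightarrow> 'a::field qrep set" where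
  "rep n dx dy = {(Va, Vb). \<forall>i\<in>{1..n}. Va i \<in> carrier_mat (dy (i - 1)) (dx i)
                                      \<and> Vb i \<in> carrier_mat (dy i) (dx i)}"

text \<open>Row offset of block row y_i (block rows y_0,...,y_n) and column offset of block column x_i
  (block columns x_n,...,x_1).\<close>
definition yoff :: "(nat \<Rightarrow> nat) \<Rightarrow> nat \<Rightarrow> nat" where
  "yoff dy i = (\<Sum>k<i. dy k)"

definition xoff :: "nat \<Rightarrow> (nat \<Rightarrow> nat) \<Rightarrow> nat \<Rightarrow> nat" where
  "xoff n dx i = (\<Sum>k\<in>{i<..n}. dx k)"

definition dimY :: "nat \<Rightarrow> (nat \<Rightarrow> nat) \<Rightarrow> nat" where
  "dimY n dy = (\<Sum>k\<le>n. dy k)"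

definition dimX :: "nat \<Rightarrow> (nat \<Rightarrow> nat) \<Rightarrow> nat" where
  "dimX n dx = (\<Sum>k\<in>{1..n}. dx k)"

definition blk :: "nat \<Rightarrow> nat \<Rightarrow> 'a::zero mat \<Rightarrow> nat \<Rightarrow> nat \<Rightarrow> 'a" where
  "blk r c A p q = (if r \<le> p \<and> p < r + dim_row A \<and> c \<le> q \<and> q < c + dim_col A
                    then A $$ (p - r, q - c) else 0)"

definition MQ :: "nat \<Rightarrow> (nat \<Rightarrow> nat) \<Rightarrow> (nat \<Rightarrow> nat) \<Rightarrow> 'a::field qrep \<Rightarrow> 'a mat" where
  "MQ n dx dy V = mat (dimY n dy) (dimX n dx) (\<lambda>(p, q).
      \<Sum>i\<in>{1..n}. blk (yoff dy (i - 1)) (xoff n dx i) (fst V i) p q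
                 + blk (yoff dy i) (xoff n dx i) (snd V i) p q)"

text \<open>Intervals are pairs (a,b) with a <= b <= 2n, the set of vertices at positions a..b.
  M_J(V): block rows of the y-vertices in J, block columns of the x-vertices in J.\<close>
definition MJ :: "nat \<Rightarrow> (nat \<Rightarrow> nat) \<Rightarrow> (nat \<Rightarrow> nat) \<Rightarrow> 'a::field qrep \<Rightarrow> nat \<times> nat \<Rightarrow> 'a mat" where
  "MJ n dx dy V J = submatrix (MQ n dx dy V)
      (\<Union>i\<in>{i. i \<le> n \<and> fst J \<le> 2 * i \<and> 2 * i \<le> snd J}. {yoff dy i..<yoff dy (Suc i)})
      (\<Union>i\<in>{i. 1 \<le> i \<and> i \<le> n \<and> fst J \<le> 2 * i - 1 \<and> 2 * i - 1 \<le> snd J}.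
          {xoff n dx i..<xoff n dx i + dx i})"

definition intervals :: "nat \<Rightarrow> (nat \<times> nat) set" where
  "intervals n = {(a, b). a \<le> b \<and> b \<le> 2 * n}"

definition satisfies :: "nat \<Rightarrow> (nat \<Rightarrow> nat) \<Rightarrow> (nat \<Rightarrow> nat) \<Rightarrow> 'a::field qrep \<Rightarrow> (nat \<times> nat \<Rightarrow> nat) \<Rightarrow> bool" where
  "satisfies n dx dy V r = (\<forall>J\<in>intervals n. mrank (MJ n dx dy V J) = r J)"

definition orbit_r :: "nat \<Rightarrow> (nat \<Rightarrow> nat) \<Rightarrow> (nat \<Rightarrow> nat) \<Rightarrow> (nat \<times> nat \<Rightarrow> nat) \<Rightarrow> 'a::field qrep set" where
  "orbit_r n dx dy r = {V \<in> rep n dx dy. satisfies n dx dy V r}"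

definition is_quiver_rank_array :: "'a::field itself \<Rightarrow> nat \<Rightarrow> (nat \<Rightarrow> nat) \<Rightarrow> (nat \<Rightarrow> nat) \<Rightarrow> (nat \<times> nat \<Rightarrow> nat) \<Rightarrow> bool" where
  "is_quiver_rank_array _ n dx dy r = (\<exists>V::'a qrep. V \<in> orbit_r n dx dy r)"

definition zeta :: "nat \<Rightarrow> (nat \<Rightarrow> nat) \<Rightarrow> (nat \<Rightarrow> nat) \<Rightarrow> 'a::field qrep \<Rightarrow> 'a mat" where
  "zeta n dx dy V = four_block_mat (MQ n dx dy V) (1\<^sub>m (dimY n dy)) (1\<^sub>m (dimX n dx)) (0\<^sub>m (dimX n dx) (dimY n dy))"

definition Yw :: "nat \<Rightarrow> (nat \<Rightarrow> nat) \<Rightarrow> (nat \<Rightarrow> nat) \<Rightarrow> 'a::field mat set" where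
  "Yw n dx dy = {four_block_mat S (1\<^sub>m (dimY n dy)) (1\<^sub>m (dimX n dx)) (0\<^sub>m (dimX n dx) (dimY n dy)) | S.
                 S \<in> carrier_mat (dimY n dy) (dimX n dx)}"

definition row_blocks :: "nat \<Rightarrow> (nat \<Rightarrow> nat) \<Rightarrow> (nat \<Rightarrow> nat) \<Rightarrow> nat list" where
  "row_blocks n dx dy = map dy [0..<Suc n] @ map dx (rev [1..<Suc n])"

definition col_blocks :: "nat \<Rightarrow> (nat \<Rightarrow> nat) \<Rightarrow> (nat \<Rightarrow> nat) \<Rightarrow> nat list" where
  "col_blocks n dx dy = map dx (rev [1..<Suc n]) @ map dy [0..<Suc n]"

definition topleft :: "nat \<Rightarrow> (nat \<Rightarrow> nat) \<Rightarrow> (nat \<Rightarrow> nat) \<Rightarrow> 'a mat \<Rightarrow> nat \<Rightarrow> nat \<Rightarrow> 'a mat" where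
  "topleft n dx dy Z i j = submatrix Z {..<sum_list (take i (row_blocks n dx dy))}
                                       {..<sum_list (take j (col_blocks n dx dy))}"

text \<open>b(r)_{i,j} = rank zeta(V)_{i x j} for (any) V in O_r; here a chosen one.\<close>
definition bmat :: "'a::field itself \<Rightarrow> nat \<Rightarrow> (nat \<Rightarrow> nat) \<Rightarrow> (nat \<Rightarrow> nat) \<Rightarrow> (nat \<times> nat \<Rightarrow> nat) \<Rightarrow> nat \<Rightarrow> nat \<Rightarrow> nat" where
  "bmat _ n dx dy r i j =
     mrank (topleft n dx dy (zeta n dx dy (SOME V::'a qrep. V \<in> orbit_r n dx dy r)) i j)"

end

theory Submission
  imports Defs
begin

text \<open>Write \<open>Z = [[S, 1], [1, 0]]\<close>. Clearing with the two identity blocks shows that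
  \<open>rank Z\<^sub>i\<^sub>\<times>\<^sub>j\<close> is a quantity depending only on the block sizes plus the rank of a corner
  rectangle of \<open>S\<close>: the block rows \<open>y\<^sub>b, \<dots>, y\<^sub>e\<^sub>-\<^sub>1\<close> against the block columns
  \<open>x\<^sub>t\<^sub>1, \<dots>, x\<^sub>t\<^sub>2\<^sub>+\<^sub>1\<close>. If \<open>S = M\<^sub>Q(V)\<close>, such a rectangle meets the arrow blocks exactly in
  \<open>M\<^sub>J(V)\<close> for an interval \<open>J\<close> (or not at all), and every interval with at least one arrow
  arises this way; so the corner ranks of \<open>M\<^sub>Q(V)\<close> and the rank array of \<open>V\<close> determine
  each other. Conversely, if \<open>Z\<close> has the ranks \<open>b(r)\<close>, every entry of \<open>S\<close> off the arrow
  blocks lies in a corner rectangle of rank \<open>0\<close>, so \<open>S = M\<^sub>Q(V)\<close> for the \<open>V\<close> read off its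
  blocks.\<close>

definition cols_indep :: "(nat \<Rightarrow> nat \<Rightarrow> 'a::field) \<Rightarrow> nat set \<Rightarrow> nat set \<Rightarrow> bool" where
  "cols_indep f R U \<longleftrightarrow> (\<forall>c. (\<forall>p\<in>R. (\<Sum>q\<in>U. c q * f p q) = 0) \<longrightarrow> (\<forall>q\<in>U. c q = 0))"

text \<open>Ranks of submatrices are taken on arbitrary row and column index sets, so that discarding
  zero lines and pivoting on unit rows or columns are combinatorial steps.\<close>

definition col_rank :: "(nat \<Rightarrow> nat \<Rightarrow> 'a::field) \<Rightarrow> nat set \<Rightarrow> nat set \<Rightarrow> nat" where
  "col_rank f R C = Max (card ` {U. U \<subseteq> C \<and> cols_indep f R U})"

lemma cols_indepD: "cols_indep f R U \<Longrightarrow> (\<And>p. p \<in> R \<Longrightarrow> (\<Sum>q\<in>U. c q * f p q) = 0) \<Longrightarrow> q \<in> U \<Longrightarrow> c q = 0"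
  unfolding cols_indep_def by blast

lemma cols_indepI: "(\<And>c q. (\<And>p. p \<in> R \<Longrightarrow> (\<Sum>q\<in>U. c q * f p q) = 0) \<Longrightarrow> q \<in> U \<Longrightarrow> c q = 0) \<Longrightarrow> cols_indep f R U"
  unfolding cols_indep_def by blast

lemma cols_indep_empty [simp]: "cols_indep f R {}"
  unfolding cols_indep_def by auto

lemma finite_indep_col_sets: "finite C \<Longrightarrow> finite {U. U \<subseteq> C \<and> cols_indep f R U}"
  by (rule finite_subset[of _ "Pow C"]) auto

lemma card_le_col_rank: assumes "finite C" "U \<subseteq> C" "cols_indep f R U" shows "card U \<le> col_rank f R C"
  unfolding col_rank_def
  by (rule Max_ge) (use assms finite_indep_col_sets[OF assms(1)] in auto)

lemma col_rank_witness: assumes "finite C" obtains U where "U \<subseteq> C" "cols_indep f R U" "card U = col_rank f R C"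
proof -
  have ne: "{} \<in> {U. U \<subseteq> C \<and> cols_indep f R U}" by simp
  have "col_rank f R C \<in> card ` {U. U \<subseteq> C \<and> cols_indep f R U}"
    unfolding col_rank_def
    by (rule Max_in) (use finite_indep_col_sets[OF assms(1), of f R] ne in blast)+
  then obtain U where U: "U \<in> {U. U \<subseteq> C \<and> cols_indep f R U}" "col_rank f R C = card U" by (rule imageE)
  show ?thesis by (rule that) (use U in simp_all)
qed

lemma col_rank_eqI:
  assumes "finite C" "\<And>U. U \<subseteq> C \<Longrightarrow> cols_indep f R U \<Longrightarrow> card U \<le> k"
    "U0 \<subseteq> C" "cols_indep f R U0" "card U0 = k"
  shows "col_rank f R C = k"
proof -
  obtain U where "U \<subseteq> C" "cols_indep f R U" "card U = col_rank f R C" using col_rank_witness[OF assms(1)] by blast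
  have "card U \<le> k" by (rule assms(2)) fact+
  then have "col_rank f R C \<le> k" using \<open>card U = col_rank f R C\<close> by simp
  moreover have "k \<le> col_rank f R C" using card_le_col_rank[OF assms(1,3,4)] assms(5) by simp
  ultimately show ?thesis by simp
qed

lemma cols_indep_subset: assumes "cols_indep f R U" "V \<subseteq> U" "finite U" shows "cols_indep f R V"
  unfolding cols_indep_def
proof (intro allI impI)
  fix c assume h: "\<forall>p\<in>R. (\<Sum>q\<in>V. c q * f p q) = 0"
  define c' where "c' = (\<lambda>q. if q \<in> V then c q else 0)"
  have "(\<Sum>q\<in>U. c' q * f p q) = (\<Sum>q\<in>V. c q * f p q)" for p
  proof -
    have "(\<Sum>q\<in>U. c' q * f p q) = (\<Sum>q\<in>U. if q \<in> V then c q * f p q else 0)"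
      by (rule sum.cong) (auto simp: c'_def)
    also have "\<dots> = (\<Sum>q\<in>U \<inter> V. c q * f p q)" using sum.inter_restrict[OF assms(3), symmetric] by simp
    also have "U \<inter> V = V" using assms(2) by blast
    finally show ?thesis .
  qed
  with h have "\<forall>p\<in>R. (\<Sum>q\<in>U. c' q * f p q) = 0" by simp
  with assms(1) have "\<forall>q\<in>U. c' q = 0" unfolding cols_indep_def by blast
  then show "\<forall>q\<in>V. c q = 0" using assms(2) unfolding c'_def by (metis subsetD)
qed

lemma cols_indep_cong: assumes "\<And>p q. p \<in> R \<Longrightarrow> q \<in> U \<Longrightarrow> f p q = g p q"
  shows "cols_indep f R U = cols_indep g R U"
  unfolding cols_indep_def using assms by (simp cong: sum.cong)

lemma col_rank_cong: assumes "\<And>p q. p \<in> R \<Longrightarrow> q \<in> C \<Longrightarrow> f p q = g p q"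
  shows "col_rank f R C = col_rank g R C"
proof -
  have "{U. U \<subseteq> C \<and> cols_indep f R U} = {U. U \<subseteq> C \<and> cols_indep g R U}"
    using cols_indep_cong[of R _ f g] assms by blast
  then show ?thesis unfolding col_rank_def by simp
qed

lemma col_rank_Un_zero_rows:
  assumes "\<And>p q. p \<in> R2 \<Longrightarrow> q \<in> C \<Longrightarrow> f p q = 0"
  shows "col_rank f (R \<union> R2) C = col_rank f R C"
proof -
  have "cols_indep f (R \<union> R2) U = cols_indep f R U" if U: "U \<subseteq> C" for U
  proof -
    have z: "(\<Sum>q\<in>U. c q * f p q) = 0" if "p \<in> R2" for p c
      using assms[OF that] U by (intro sum.neutral) auto
    show ?thesis unfolding cols_indep_def using z by blast
  qed
  then have "{U. U \<subseteq> C \<and> cols_indep f (R \<union> R2) U} = {U. U \<subseteq> C \<and> cols_indep f R U}"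
    by (intro Collect_cong conj_cong refl)
  then show ?thesis unfolding col_rank_def by simp
qed

lemma not_cols_indep_zero_col:
  assumes "q0 \<in> U" "finite U" "\<And>p. p \<in> R \<Longrightarrow> f p q0 = 0"
  shows "\<not> cols_indep f R U"
proof
  assume indep: "cols_indep f R U"
  define c where "c = (\<lambda>q. if q = q0 then (1::'a) else 0)"
  have "(\<Sum>q\<in>U. c q * f p q) = f p q0" for p
    using assms(1,2) by (simp add: c_def if_distrib[of "\<lambda>x. x * _"] sum.delta cong: if_cong)
  then have "c q0 = 0" using cols_indepD[OF indep _ assms(1)] assms(3) by simp
  then show False unfolding c_def by simp
qed

lemma col_rank_Un_zero_cols:
  assumes "finite C" "finite C2" "\<And>p q. p \<in> R \<Longrightarrow> q \<in> C2 \<Longrightarrow> f p q = 0"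
  shows "col_rank f R (C \<union> C2) = col_rank f R C"
proof -
  have "U \<subseteq> C" if U: "U \<subseteq> C \<union> C2" and iU: "cols_indep f R U" for U
  proof
    fix q assume q: "q \<in> U"
    have finU: "finite U" using U assms(1,2) finite_subset by blast
    show "q \<in> C"
    proof (rule ccontr)
      assume "q \<notin> C" then have "q \<in> C2" using U q by blast
      then show False using not_cols_indep_zero_col[OF q finU] iU assms(3) by blast
    qed
  qed
  then have "{U. U \<subseteq> C \<union> C2 \<and> cols_indep f R U} = {U. U \<subseteq> C \<and> cols_indep f R U}" by blast
  then show ?thesis unfolding col_rank_def by simp
qed

lemma col_rank_eq_0_iff:
  assumes "finite C"
  shows "col_rank f R C = 0 \<longleftrightarrow> (\<forall>p\<in>R. \<forall>q\<in>C. f p q = 0)"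
proof
  assume rk0: "col_rank f R C = 0"
  show "\<forall>p\<in>R. \<forall>q\<in>C. f p q = 0"
  proof (intro ballI)
    fix p q assume p: "p \<in> R" and q: "q \<in> C"
    show "f p q = 0"
    proof (rule ccontr)
      assume "f p q \<noteq> 0"
      then have "cols_indep f R {q}" unfolding cols_indep_def using p by auto
      then have "card {q} \<le> col_rank f R C" using card_le_col_rank[OF assms] q by blast
      with rk0 show False by simp
    qed
  qed
next
  assume "\<forall>p\<in>R. \<forall>q\<in>C. f p q = 0"
  then show "col_rank f R C = 0"
    using col_rank_Un_zero_cols[of "{}" C R f] assms by (simp add: col_rank_def)
qed

lemma col_rank_restrict_support:
  assumes "finite C" "\<And>p q. p \<in> R \<Longrightarrow> q \<in> C \<Longrightarrow> f p q \<noteq> 0 \<Longrightarrow> p \<in> R' \<and> q \<in> C'"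
  shows "col_rank f R C = col_rank f (R \<inter> R') (C \<inter> C')"
proof -
  have e1: "(R \<inter> R') \<union> (R - R') = R" by blast
  have e2: "(C \<inter> C') \<union> (C - C') = C" by blast
  have 1: "col_rank f ((R \<inter> R') \<union> (R - R')) C = col_rank f (R \<inter> R') C" by (rule col_rank_Un_zero_rows) (use assms in auto)
  have 2: "col_rank f (R \<inter> R') ((C \<inter> C') \<union> (C - C')) = col_rank f (R \<inter> R') (C \<inter> C')" by (rule col_rank_Un_zero_cols) (use assms in auto)
  show ?thesis using 1 2 unfolding e1 e2 by simp
qed

lemma col_rank_eq_if_same_support:
  assumes "finite C" "finite C'"
    "\<And>p q. p \<in> R \<Longrightarrow> q \<in> C \<Longrightarrow> f p q \<noteq> 0 \<Longrightarrow> p \<in> R' \<and> q \<in> C'"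
    "\<And>p q. p \<in> R' \<Longrightarrow> q \<in> C' \<Longrightarrow> f p q \<noteq> 0 \<Longrightarrow> p \<in> R \<and> q \<in> C"
  shows "col_rank f R C = col_rank f R' C'"
proof -
  have 1: "col_rank f R C = col_rank f (R \<inter> R') (C \<inter> C')" by (rule col_rank_restrict_support[OF assms(1) assms(3)])
  have 2: "col_rank f R' C' = col_rank f (R' \<inter> R) (C' \<inter> C)" by (rule col_rank_restrict_support[OF assms(2) assms(4)])
  have 3: "R' \<inter> R = R \<inter> R'" "C' \<inter> C = C \<inter> C'" by blast+
  show ?thesis unfolding 1 2 3 ..
qed

lemma col_rank_Suc_pivotI:
  assumes "finite C" "j0 \<in> C"
    and insert_indep: "\<And>U. U \<subseteq> C - {j0} \<Longrightarrow> cols_indep f (R - {r}) U \<Longrightarrow> cols_indep f R (insert j0 U)"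
    and remove_indep: "\<And>U. U \<subseteq> C \<Longrightarrow> cols_indep f R U \<Longrightarrow>
      \<exists>U'\<subseteq>C - {j0}. card U \<le> Suc (card U') \<and> cols_indep f (R - {r}) U'"
  shows "col_rank f R C = Suc (col_rank f (R - {r}) (C - {j0}))"
proof -
  obtain U0 where U0: "U0 \<subseteq> C - {j0}" "cols_indep f (R - {r}) U0"
    "card U0 = col_rank f (R - {r}) (C - {j0})"
    using col_rank_witness[of "C - {j0}"] assms(1) by blast
  have "finite U0" "j0 \<notin> U0" using U0(1) assms(1) finite_subset by blast+
  then have card0: "card (insert j0 U0) = Suc (col_rank f (R - {r}) (C - {j0}))"
    using U0(3) by simp
  have sub0: "insert j0 U0 \<subseteq> C" using U0(1) assms(2) by blast
  show ?thesis
  proof (rule col_rank_eqI[OF assms(1) _ sub0 insert_indep[OF U0(1,2)] card0])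
    fix U assume "U \<subseteq> C" "cols_indep f R U"
    then obtain U' where U': "U' \<subseteq> C - {j0}" "card U \<le> Suc (card U')" "cols_indep f (R - {r}) U'"
      using remove_indep by blast
    have "card U' \<le> col_rank f (R - {r}) (C - {j0})"
      using card_le_col_rank[OF _ U'(1,3)] assms(1) by simp
    then show "card U \<le> Suc (col_rank f (R - {r}) (C - {j0}))" using U'(2) by simp
  qed
qed

lemma cols_indep_insert_unit_row:
  assumes "cols_indep f (R - {r}) U" "finite U" "j0 \<notin> U" "r \<in> R" "f r j0 \<noteq> 0"
    "\<And>q. q \<in> U \<Longrightarrow> f r q = 0"
  shows "cols_indep f R (insert j0 U)"
proof (rule cols_indepI)
  fix c q assume h: "\<And>p. p \<in> R \<Longrightarrow> (\<Sum>q\<in>insert j0 U. c q * f p q) = 0" and q: "q \<in> insert j0 U"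
  have "(\<Sum>q\<in>insert j0 U. c q * f r q) = c j0 * f r j0"
    using assms(2,3,6) by simp
  then have cj0: "c j0 = 0" using h[OF assms(4)] assms(5) by simp
  have "c q' = 0" if "q' \<in> U" for q'
  proof (rule cols_indepD[OF assms(1) _ that])
    fix p assume "p \<in> R - {r}"
    then show "(\<Sum>q\<in>U. c q * f p q) = 0" using h[of p] assms(2,3) cj0 by simp
  qed
  then show "c q = 0" using q cj0 by blast
qed

lemma cols_indep_remove_zero_row:
  assumes "cols_indep f R U" "\<And>q. q \<in> U \<Longrightarrow> f r q = 0"
  shows "cols_indep f (R - {r}) U"
proof (rule cols_indepI)
  fix c q assume h: "\<And>p. p \<in> R - {r} \<Longrightarrow> (\<Sum>q\<in>U. c q * f p q) = 0" and q: "q \<in> U"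
  show "c q = 0"
  proof (rule cols_indepD[OF assms(1) _ q])
    fix p assume "p \<in> R"
    then show "(\<Sum>q\<in>U. c q * f p q) = 0" using h[of p] assms(2) by (cases "p = r") simp_all
  qed
qed

lemma col_rank_unit_row:
  assumes "finite C" "r \<in> R" "j0 \<in> C" "f r j0 \<noteq> 0" "\<And>q. q \<in> C \<Longrightarrow> q \<noteq> j0 \<Longrightarrow> f r q = 0"
  shows "col_rank f R C = Suc (col_rank f (R - {r}) (C - {j0}))"
proof (rule col_rank_Suc_pivotI[OF assms(1,3)])
  fix U assume "U \<subseteq> C - {j0}" "cols_indep f (R - {r}) U"
  then show "cols_indep f R (insert j0 U)"
    using cols_indep_insert_unit_row[of f R r U j0] assms(1,2,4,5) finite_subset by blast
next
  fix U assume U: "U \<subseteq> C" "cols_indep f R U"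
  then have "finite U" using assms(1) finite_subset by blast
  have "cols_indep f (R - {r}) (U - {j0})"
    using cols_indep_remove_zero_row[OF cols_indep_subset[OF U(2) _ \<open>finite U\<close>]] U(1) assms(5)
    by blast
  moreover have "card U \<le> Suc (card (U - {j0}))"
    using \<open>finite U\<close> by (cases "j0 \<in> U") (simp_all add: card_Suc_Diff1)
  ultimately show "\<exists>U'\<subseteq>C - {j0}. card U \<le> Suc (card U') \<and> cols_indep f (R - {r}) U'"
    using U(1) by blast
qed

text \<open>The dependence \<open>c\<close> cannot vanish on row \<open>r\<close>; subtracting a multiple of it
  from any relation among the columns \<open>U - {q1}\<close> kills row \<open>r\<close>, so independence on \<open>R\<close> applies.\<close>
lemma cols_indep_remove_row_dependent:
  assumes indep: "cols_indep f R U" and "finite U"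
    and c: "\<And>p. p \<in> R - {r} \<Longrightarrow> (\<Sum>q\<in>U. c q * f p q) = 0" and q1: "q1 \<in> U" "c q1 \<noteq> 0"
  shows "cols_indep f (R - {r}) (U - {q1})"
proof (rule cols_indepI)
  define a where "a = (\<Sum>q\<in>U. c q * f r q)"
  have a: "a \<noteq> 0"
  proof
    assume "a = 0"
    then have "(\<Sum>q\<in>U. c q * f p q) = 0" if "p \<in> R" for p
      using c[of p] that unfolding a_def by (cases "p = r") simp_all
    then show False using cols_indepD[OF indep _ q1(1)] q1(2) by blast
  qed
  fix d q assume d: "\<And>p. p \<in> R - {r} \<Longrightarrow> (\<Sum>q\<in>U - {q1}. d q * f p q) = 0" and q: "q \<in> U - {q1}"
  define d' where "d' = d(q1 := 0)"
  have d': "(\<Sum>q\<in>U. d' q * f p q) = (\<Sum>q\<in>U - {q1}. d q * f p q)" for p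
    using \<open>finite U\<close> q1(1) by (simp add: d'_def sum.remove)
  define b where "b = (\<Sum>q\<in>U. d' q * f r q)"
  define e where "e q = b * c q - a * d' q" for q
  have comb: "(\<Sum>q\<in>U. e q * f p q) = b * (\<Sum>q\<in>U. c q * f p q) - a * (\<Sum>q\<in>U. d' q * f p q)" for p
  proof -
    have "(\<Sum>q\<in>U. e q * f p q) = (\<Sum>q\<in>U. b * (c q * f p q) - a * (d' q * f p q))"
      by (rule sum.cong) (simp_all add: e_def left_diff_distrib)
    also have "\<dots> = b * (\<Sum>q\<in>U. c q * f p q) - a * (\<Sum>q\<in>U. d' q * f p q)"
      by (simp only: sum_subtractf sum_distrib_left)
    finally show ?thesis .
  qed
  have e0: "e q' = 0" if "q' \<in> U" for q'
  proof (rule cols_indepD[OF indep _ that])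
    fix p assume "p \<in> R"
    show "(\<Sum>q\<in>U. e q * f p q) = 0"
    proof (cases "p = r")
      case True
      then show ?thesis unfolding comb by (simp add: a_def[symmetric] b_def[symmetric])
    next
      case False
      then show ?thesis unfolding comb d' using c d \<open>p \<in> R\<close> by simp
    qed
  qed
  have "b = 0" using e0[OF q1(1)] q1(2) by (simp add: e_def d'_def)
  then show "d q = 0" using e0[of q] q a by (simp add: e_def d'_def)
qed

lemma cols_indep_remove_row:
  assumes "cols_indep f R U" "finite U"
  shows "\<exists>U'\<subseteq>U. card U \<le> Suc (card U') \<and> cols_indep f (R - {r}) U'"
proof (cases "cols_indep f (R - {r}) U")
  case True then show ?thesis by (intro exI[of _ U]) auto
next
  case False
  then obtain c where "\<And>p. p \<in> R - {r} \<Longrightarrow> (\<Sum>q\<in>U. c q * f p q) = 0" "\<exists>q1\<in>U. c q1 \<noteq> 0"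
    unfolding cols_indep_def by blast
  then obtain q1 where "\<And>p. p \<in> R - {r} \<Longrightarrow> (\<Sum>q\<in>U. c q * f p q) = 0" "q1 \<in> U" "c q1 \<noteq> 0"
    by blast
  then have "cols_indep f (R - {r}) (U - {q1})"
    using cols_indep_remove_row_dependent[OF assms] by blast
  moreover have "card U \<le> Suc (card (U - {q1}))" using \<open>q1 \<in> U\<close> assms(2) by (simp add: card_Diff_singleton)
  ultimately show ?thesis by (intro exI[of _ "U - {q1}"]) auto
qed

lemma cols_indep_insert_unit_col:
  assumes "cols_indep f (R - {r}) U" "finite U" "j0 \<notin> U" "r \<in> R" "f r j0 \<noteq> 0"
    "\<And>p. p \<in> R \<Longrightarrow> p \<noteq> r \<Longrightarrow> f p j0 = 0"
  shows "cols_indep f R (insert j0 U)"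
proof (rule cols_indepI)
  fix c q assume h: "\<And>p. p \<in> R \<Longrightarrow> (\<Sum>q\<in>insert j0 U. c q * f p q) = 0" and q: "q \<in> insert j0 U"
  have cU: "c q' = 0" if "q' \<in> U" for q'
  proof (rule cols_indepD[OF assms(1) _ that])
    fix p assume "p \<in> R - {r}"
    then show "(\<Sum>q\<in>U. c q * f p q) = 0" using h[of p] assms(2,3,6) by simp
  qed
  then have "c j0 * f r j0 = 0" using h[OF assms(4)] assms(2,3) by simp
  then show "c q = 0" using q cU assms(5) by auto
qed

lemma cols_indep_remove_unit_col:
  assumes "cols_indep f R U" "finite U" "j0 \<in> U" "f r j0 \<noteq> 0"
    "\<And>p. p \<in> R \<Longrightarrow> p \<noteq> r \<Longrightarrow> f p j0 = 0"
  shows "cols_indep f (R - {r}) (U - {j0})"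
proof (rule cols_indepI)
  fix c q assume h: "\<And>p. p \<in> R - {r} \<Longrightarrow> (\<Sum>q\<in>U - {j0}. c q * f p q) = 0" and q: "q \<in> U - {j0}"
  define c' where "c' = c(j0 := - (\<Sum>q\<in>U - {j0}. c q * f r q) / f r j0)"
  have split: "(\<Sum>q\<in>U. c' q * f p q) = c' j0 * f p j0 + (\<Sum>q\<in>U - {j0}. c q * f p q)" for p
    using assms(2,3) by (simp add: c'_def sum.remove)
  have "c' q = 0"
  proof (rule cols_indepD[OF assms(1) _ ])
    fix p assume "p \<in> R"
    then show "(\<Sum>q\<in>U. c' q * f p q) = 0"
      unfolding split using h[of p] assms(4,5) by (cases "p = r") (simp_all add: c'_def)
  qed (use q in blast)
  then show "c q = 0" using q by (simp add: c'_def)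
qed

lemma col_rank_unit_col:
  assumes "finite C" "r \<in> R" "j0 \<in> C" "f r j0 \<noteq> 0" "\<And>p. p \<in> R \<Longrightarrow> p \<noteq> r \<Longrightarrow> f p j0 = 0"
  shows "col_rank f R C = Suc (col_rank f (R - {r}) (C - {j0}))"
proof (rule col_rank_Suc_pivotI[OF assms(1,3)])
  fix U assume "U \<subseteq> C - {j0}" "cols_indep f (R - {r}) U"
  then show "cols_indep f R (insert j0 U)"
    using cols_indep_insert_unit_col[of f R r U j0] assms(1,2,4,5) finite_subset by blast
next
  fix U assume U: "U \<subseteq> C" "cols_indep f R U"
  then have finU: "finite U" using assms(1) finite_subset by blast
  show "\<exists>U'\<subseteq>C - {j0}. card U \<le> Suc (card U') \<and> cols_indep f (R - {r}) U'"
  proof (cases "j0 \<in> U")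
    case True
    then show ?thesis
      using cols_indep_remove_unit_col[OF U(2) finU True assms(4,5)] U(1) finU
      by (intro exI[of _ "U - {j0}"]) (auto simp: card_Diff_singleton)
  next
    case False
    then show ?thesis using cols_indep_remove_row[OF U(2) finU, of r] U(1) by blast
  qed
qed

lemma col_rank_unit_rows:
  assumes "finite P" "finite C" "P \<subseteq> R" "inj_on \<sigma> P" "\<sigma> ` P \<subseteq> C"
    "\<And>p. p \<in> P \<Longrightarrow> f p (\<sigma> p) \<noteq> 0" "\<And>p q. p \<in> P \<Longrightarrow> q \<in> C \<Longrightarrow> q \<noteq> \<sigma> p \<Longrightarrow> f p q = 0"
  shows "col_rank f R C = card P + col_rank f (R - P) (C - \<sigma> ` P)"
  using assms
proof (induction P arbitrary: R C rule: finite_induct)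
  case empty then show ?case by simp
next
  case (insert p P)
  have "col_rank f R C = Suc (col_rank f (R - {p}) (C - {\<sigma> p}))"
    by (rule col_rank_unit_row) (use insert.prems in auto)
  also have "col_rank f (R - {p}) (C - {\<sigma> p}) = card P + col_rank f (R - {p} - P) (C - {\<sigma> p} - \<sigma> ` P)"
  proof (rule insert.IH)
    show "\<sigma> ` P \<subseteq> C - {\<sigma> p}" using insert.prems(3,4) insert.hyps(2) by (auto simp: inj_on_def)
  qed (use insert.prems insert.hyps in \<open>auto simp: inj_on_def\<close>)
  finally have calc: "col_rank f R C = Suc (card P + col_rank f (R - {p} - P) (C - {\<sigma> p} - \<sigma> ` P))" .
  have e1: "R - {p} - P = R - insert p P" by blast
  have e2: "C - {\<sigma> p} - \<sigma> ` P = C - \<sigma> ` insert p P" by auto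
  have c: "card (insert p P) = Suc (card P)" by (rule card_insert_disjoint) (use insert.hyps in auto)
  show ?case unfolding c add_Suc using calc e1 e2 by (simp only:)
qed

lemma col_rank_unit_cols:
  assumes "finite Q" "finite C" "Q \<subseteq> C" "inj_on \<tau> Q" "\<tau> ` Q \<subseteq> R"
    "\<And>q. q \<in> Q \<Longrightarrow> f (\<tau> q) q \<noteq> 0" "\<And>p q. q \<in> Q \<Longrightarrow> p \<in> R \<Longrightarrow> p \<noteq> \<tau> q \<Longrightarrow> f p q = 0"
  shows "col_rank f R C = card Q + col_rank f (R - \<tau> ` Q) (C - Q)"
  using assms
proof (induction Q arbitrary: R C rule: finite_induct)
  case empty then show ?case by simp
next
  case (insert q Q)
  have "col_rank f R C = Suc (col_rank f (R - {\<tau> q}) (C - {q}))"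
    by (rule col_rank_unit_col) (use insert.prems in auto)
  also have "col_rank f (R - {\<tau> q}) (C - {q}) = card Q + col_rank f (R - {\<tau> q} - \<tau> ` Q) (C - {q} - Q)"
  proof (rule insert.IH)
    show "\<tau> ` Q \<subseteq> R - {\<tau> q}" using insert.prems(3,4) insert.hyps(2) by (auto simp: inj_on_def)
  qed (use insert.prems insert.hyps in \<open>auto simp: inj_on_def\<close>)
  finally have calc: "col_rank f R C = Suc (card Q + col_rank f (R - {\<tau> q} - \<tau> ` Q) (C - {q} - Q))" .
  have e1: "C - {q} - Q = C - insert q Q" by blast
  have e2: "R - {\<tau> q} - \<tau> ` Q = R - \<tau> ` insert q Q" by auto
  have c: "card (insert q Q) = Suc (card Q)" by (rule card_insert_disjoint) (use insert.hyps in auto)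
  show ?case unfolding c add_Suc using calc e1 e2 by (simp only:)
qed

lemma cols_indep_inj:
  fixes f :: "nat \<Rightarrow> nat \<Rightarrow> 'a::field"
  assumes "cols_indep f R U" "finite U" "j \<in> U" "j' \<in> U" "\<And>p. p \<in> R \<Longrightarrow> f p j = f p j'"
  shows "j = j'"
proof (rule ccontr)
  assume ne: "j \<noteq> j'"
  define c :: "nat \<Rightarrow> 'a" where "c = (\<lambda>q. if q = j then 1 else if q = j' then - 1 else 0)"
  have "c j = 0"
  proof (rule cols_indepD[OF assms(1) _ assms(3)])
    fix p assume p: "p \<in> R"
    have "(\<Sum>q\<in>U. c q * f p q) = (\<Sum>q\<in>U. (if q = j then f p j else 0) + (if q = j' then - f p j' else 0))"
      by (rule sum.cong) (use ne in \<open>auto simp: c_def\<close>)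
    also have "\<dots> = f p j - f p j'" using assms(2-4) by (simp add: sum.distrib)
    finally show "(\<Sum>q\<in>U. c q * f p q) = 0" using assms(5)[OF p] by simp
  qed
  then show False by (simp add: c_def)
qed

context vec_space
begin

lemma lincomb_cols_index:
  assumes A: "A \<in> carrier_mat n nc" and U: "U \<subseteq> {..<nc}" "inj_on (col A) U" and p: "p < n"
  shows "lincomb a (col A ` U) $ p = (\<Sum>j\<in>U. a (col A j) * A $$ (p, j))"
proof -
  have finU: "finite U" using U(1) finite_subset by blast
  have "col A ` U \<subseteq> carrier_vec n" using A by auto
  then have "lincomb a (col A ` U) $ p = (\<Sum>x\<in>col A ` U. a x * x $ p)"
    using lincomb_index[OF p] by blast
  also have "\<dots> = (\<Sum>j\<in>U. a (col A j) * col A j $ p)"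
    by (rule sum.reindex[OF U(2), unfolded comp_def])
  also have "\<dots> = (\<Sum>j\<in>U. a (col A j) * A $$ (p, j))"
    by (rule sum.cong) (use A U(1) p in auto)
  finally show ?thesis .
qed

lemma lin_indpt_cols_if_cols_indep:
  assumes A: "A \<in> carrier_mat n nc" and U: "U \<subseteq> {..<nc}" "inj_on (col A) U"
    and indep: "cols_indep (\<lambda>p q. A $$ (p, q)) {..<n} U"
  shows "lin_indpt (col A ` U)"
proof (rule finite_lin_indpt2)
  fix a assume "lincomb a (col A ` U) = 0\<^sub>v n"
  then have "(\<Sum>j\<in>U. (a \<circ> col A) j * A $$ (p, j)) = 0" if "p \<in> {..<n}" for p
    using lincomb_cols_index[OF A U, of p a] that by (simp add: comp_def)
  then have "(a \<circ> col A) j = 0" if "j \<in> U" for j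
    using cols_indepD[OF indep _ that] by blast
  then show "\<forall>v\<in>col A ` U. a v = 0" by auto
qed (use A U(1) finite_subset in auto)

lemma cols_indep_if_lin_indpt:
  assumes A: "A \<in> carrier_mat n nc" and U: "U \<subseteq> {..<nc}" "inj_on (col A) U"
    and li: "lin_indpt (col A ` U)"
  shows "cols_indep (\<lambda>p q. A $$ (p, q)) {..<n} U"
proof (rule cols_indepI)
  fix c q assume h: "\<And>p. p \<in> {..<n} \<Longrightarrow> (\<Sum>q\<in>U. c q * A $$ (p, q)) = 0" and q: "q \<in> U"
  have finU: "finite U" using U(1) finite_subset by blast
  define a where "a v = c (the_inv_into U (col A) v)" for v
  have aj: "a (col A j) = c j" if "j \<in> U" for j
    unfolding a_def using the_inv_into_f_f[OF U(2) that] by simp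
  have lc: "lincomb a (col A ` U) = 0\<^sub>v n"
  proof (rule eq_vecI)
    show "dim_vec (lincomb a (col A ` U)) = dim_vec (0\<^sub>v n)"
    proof -
      have "col A ` U \<subseteq> carrier_vec n" using A by auto
      then show ?thesis using lincomb_dim[OF finite_imageI[OF finU]] by simp
    qed
    fix p assume "p < dim_vec (0\<^sub>v n)"
    then have p: "p < n" by simp
    have "lincomb a (col A ` U) $ p = (\<Sum>j\<in>U. c j * A $$ (p, j))"
      unfolding lincomb_cols_index[OF A U p] by (rule sum.cong) (simp_all add: aj)
    then show "lincomb a (col A ` U) $ p = 0\<^sub>v n $ p" using h p by simp
  qed
  show "c q = 0"
  proof (rule ccontr)
    assume "c q \<noteq> 0"
    then have "lin_dep (col A ` U)"
      using lin_dep_crit[OF _ subset_refl, where a = a and v = "col A q"] lc finU q aj by simp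
    then show False using li by simp
  qed
qed

lemma col_rank_le_rank:
  assumes A: "A \<in> carrier_mat n nc"
  shows "col_rank (\<lambda>p q. A $$ (p, q)) {..<n} {..<nc} \<le> rank A"
proof -
  obtain U where U: "U \<subseteq> {..<nc}" "cols_indep (\<lambda>p q. A $$ (p, q)) {..<n} U"
    "card U = col_rank (\<lambda>p q. A $$ (p, q)) {..<n} {..<nc}"
    using col_rank_witness[of "{..<nc}"] by blast
  have finU: "finite U" using U(1) finite_subset by blast
  have inj: "inj_on (col A) U"
  proof (rule inj_onI)
    fix j j' assume j: "j \<in> U" "j' \<in> U" and eq: "col A j = col A j'"
    have "A $$ (p, j) = A $$ (p, j')" if "p \<in> {..<n}" for p
    proof -
      have "j < nc" "j' < nc" using j U(1) by auto
      then show ?thesis using arg_cong[OF eq, of "\<lambda>v. v $ p"] that A by simp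
    qed
    then show "j = j'" using cols_indep_inj[OF U(2) finU j] by blast
  qed
  have "lin_indpt (col A ` U)" by (rule lin_indpt_cols_if_cols_indep[OF A U(1) inj U(2)])
  moreover have "col A ` U \<subseteq> set (cols A)" using A U(1) by (auto simp: cols_def)
  ultimately have "card (col A ` U) \<le> rank A" using rank_ge_card_indpt[OF A] by blast
  then show ?thesis using U(3) card_image[OF inj] by simp
qed

lemma rank_le_col_rank:
  assumes A: "A \<in> carrier_mat n nc"
  shows "rank A \<le> col_rank (\<lambda>p q. A $$ (p, q)) {..<n} {..<nc}"
proof -
  obtain S where S: "maximal S (\<lambda>T. T \<subseteq> set (cols A) \<and> lin_indpt T)"
    using maximal_exists[of "(\<lambda>T. T \<subseteq> set (cols A) \<and> lin_indpt T)" "card (set (cols A))" "{}"]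
    by (meson List.finite_set card_mono empty_iff empty_subsetI finite_lin_indpt2 rev_finite_subset)
  have Ssub: "S \<subseteq> set (cols A)" and li: "lin_indpt S" using S unfolding maximal_def by auto
  have setcols: "set (cols A) = col A ` {..<nc}" using A by (auto simp: cols_def)
  obtain U where U: "U \<subseteq> {..<nc}" "inj_on (col A) U" "S = col A ` U"
    using Ssub unfolding setcols subset_image_inj by blast
  have "cols_indep (\<lambda>p q. A $$ (p, q)) {..<n} U"
    using cols_indep_if_lin_indpt[OF A U(1,2)] li unfolding U(3) by blast
  then have "card U \<le> col_rank (\<lambda>p q. A $$ (p, q)) {..<n} {..<nc}"
    using card_le_col_rank[of "{..<nc}" U] U(1) by blast
  moreover have "card S = card U" using U(2,3) card_image by blast
  moreover have "rank A = card S" using rank_card_indpt[OF A S] .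
  ultimately show ?thesis by simp
qed

lemma rank_eq_col_rank:
  "A \<in> carrier_mat n nc \<Longrightarrow> rank A = col_rank (\<lambda>p q. A $$ (p, q)) {..<n} {..<nc}"
  by (rule antisym[OF rank_le_col_rank col_rank_le_rank])

end

lemma mrank_eq_col_rank: "mrank A = col_rank (\<lambda>p q. A $$ (p,q)) {..<dim_row A} {..<dim_col A}"
  unfolding mrank_def by (rule vec_space.rank_eq_col_rank) (rule carrier_matI; simp)

lemma cols_indep_reindex:
  assumes injU: "inj_on \<tau> U"
  shows "cols_indep (\<lambda>p q. f (\<sigma> p) (\<tau> q)) R U = cols_indep f (\<sigma> ` R) (\<tau> ` U)"
proof -
  have s: "(\<Sum>q\<in>\<tau> ` U. c q * f p q) = (\<Sum>q\<in>U. c (\<tau> q) * f p (\<tau> q))" for c p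
    using sum.reindex[OF injU] by (simp add: comp_def)
  show ?thesis
  proof
    assume iA: "cols_indep (\<lambda>p q. f (\<sigma> p) (\<tau> q)) R U"
    show "cols_indep f (\<sigma> ` R) (\<tau> ` U)"
    proof (rule cols_indepI)
      fix c q assume h: "\<And>p. p \<in> \<sigma> ` R \<Longrightarrow> (\<Sum>q\<in>\<tau> ` U. c q * f p q) = 0" and q: "q \<in> \<tau> ` U"
      then obtain q' where q': "q' \<in> U" "q = \<tau> q'" by blast
      have "(c \<circ> \<tau>) q' = 0"
      proof (rule cols_indepD[OF iA _ q'(1)])
        fix p assume "p \<in> R"
        then show "(\<Sum>q\<in>U. (c \<circ> \<tau>) q * f (\<sigma> p) (\<tau> q)) = 0" using h[of "\<sigma> p"] s by simp
      qed
      then show "c q = 0" using q' by simp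
    qed
  next
    assume iB: "cols_indep f (\<sigma> ` R) (\<tau> ` U)"
    show "cols_indep (\<lambda>p q. f (\<sigma> p) (\<tau> q)) R U"
    proof (rule cols_indepI)
      fix c q assume h: "\<And>p. p \<in> R \<Longrightarrow> (\<Sum>q\<in>U. c q * f (\<sigma> p) (\<tau> q)) = 0" and q: "q \<in> U"
      define c' where "c' = (\<lambda>v. c (the_inv_into U \<tau> v))"
      have c': "c' (\<tau> j) = c j" if "j \<in> U" for j
        unfolding c'_def using the_inv_into_f_f[OF injU that] by simp
      have "c' (\<tau> q) = 0"
      proof (rule cols_indepD[OF iB _ imageI[OF q]])
        fix p assume "p \<in> \<sigma> ` R"
        then obtain p' where p': "p' \<in> R" "p = \<sigma> p'" by blast
        have "(\<Sum>q\<in>\<tau> ` U. c' q * f p q) = (\<Sum>q\<in>U. c' (\<tau> q) * f p (\<tau> q))" by (rule s)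
        also have "\<dots> = (\<Sum>q\<in>U. c q * f (\<sigma> p') (\<tau> q))"
          by (rule sum.cong) (use c' p' in auto)
        finally show "(\<Sum>q\<in>\<tau> ` U. c' q * f p q) = 0" using h[OF p'(1)] by simp
      qed
      then show "c q = 0" using c'[OF q] by simp
    qed
  qed
qed

lemma col_rank_reindex:
  assumes inj: "inj_on \<tau> C"
  shows "col_rank (\<lambda>p q. f (\<sigma> p) (\<tau> q)) R C = col_rank f (\<sigma> ` R) (\<tau> ` C)"
proof -
  let ?g = "\<lambda>p q. f (\<sigma> p) (\<tau> q)"
  let ?I = "{U. U \<subseteq> C \<and> cols_indep ?g R U}"
  have indep: "cols_indep ?g R U \<longleftrightarrow> cols_indep f (\<sigma> ` R) (\<tau> ` U)" if "U \<subseteq> C" for U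
    using cols_indep_reindex[OF inj_on_subset[OF inj that]] .
  have "{V. V \<subseteq> \<tau> ` C \<and> cols_indep f (\<sigma> ` R) V} = (`) \<tau> ` ?I"
  proof (intro Set.set_eqI iffI)
    fix V assume V: "V \<in> {V. V \<subseteq> \<tau> ` C \<and> cols_indep f (\<sigma> ` R) V}"
    then have "V \<subseteq> \<tau> ` C" by simp
    then obtain U where U: "U \<subseteq> C" "V = \<tau> ` U" by (rule subset_imageE)
    then have "U \<in> ?I" using V indep[OF U(1)] by simp
    then show "V \<in> (`) \<tau> ` ?I" using U(2) by blast
  next
    fix V assume "V \<in> (`) \<tau> ` ?I"
    then obtain U where U: "U \<subseteq> C" "cols_indep ?g R U" "V = \<tau> ` U" by blast
    then show "V \<in> {V. V \<subseteq> \<tau> ` C \<and> cols_indep f (\<sigma> ` R) V}" using indep[OF U(1)] by auto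
  qed
  moreover have "card ` ((`) \<tau> ` ?I) = card ` ?I"
    unfolding image_image using card_image[OF inj_on_subset[OF inj]] by (intro image_cong) auto
  ultimately show ?thesis unfolding col_rank_def by simp
qed

lemma bij_betw_pick: "bij_betw (pick I) {..<card {a. a < m \<and> a \<in> I}} {a. a < m \<and> a \<in> I}"
proof -
  define S where "S = {a. a < m \<and> a \<in> I}"
  have eq: "pick I k = pick S k" if "k < card S" for k
    using pick_reduce_set[of k m I] that unfolding S_def by simp
  have inj: "inj_on (pick I) {..<card S}"
  proof (rule inj_onI)
    fix x y assume xy: "x \<in> {..<card S}" "y \<in> {..<card S}" "pick I x = pick I y"
    show "x = y"
    proof (rule ccontr)
      assume "x \<noteq> y"
      then have "x < y \<or> y < x" by arith
      then show False
        using pick_mono_le[of y S x] pick_mono_le[of x S y] xy eq by auto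
    qed
  qed
  have sub: "pick I ` {..<card S} \<subseteq> S"
    using pick_in_set_le[of _ S] eq by auto
  have "finite S" unfolding S_def by simp
  then have "pick I ` {..<card S} = S"
    by (rule card_subset_eq[OF _ sub]) (simp add: card_image[OF inj])
  then show ?thesis using inj unfolding S_def bij_betw_def by simp
qed

lemma mrank_submatrix:
  "mrank (submatrix A I J) = col_rank (\<lambda>p q. A $$ (p,q)) (I \<inter> {..<dim_row A}) (J \<inter> {..<dim_col A})"
proof -
  let ?SI = "{i. i < dim_row A \<and> i \<in> I}" and ?SJ = "{j. j < dim_col A \<and> j \<in> J}"
  have "mrank (submatrix A I J) = col_rank (\<lambda>p q. submatrix A I J $$ (p,q)) {..<card ?SI} {..<card ?SJ}"
    unfolding mrank_eq_col_rank dim_submatrix ..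
  also have "\<dots> = col_rank (\<lambda>p q. A $$ (pick I p, pick J q)) {..<card ?SI} {..<card ?SJ}"
    by (rule col_rank_cong) (simp add: submatrix_index)
  also have "\<dots> = col_rank (\<lambda>p q. A $$ (p, q)) (pick I ` {..<card ?SI}) (pick J ` {..<card ?SJ})"
    by (rule col_rank_reindex[OF bij_betw_imp_inj_on[OF bij_betw_pick]])
  also have "pick I ` {..<card ?SI} = I \<inter> {..<dim_row A}" unfolding bij_betw_imp_surj_on[OF bij_betw_pick] by blast
  also have "pick J ` {..<card ?SJ} = J \<inter> {..<dim_col A}" unfolding bij_betw_imp_surj_on[OF bij_betw_pick] by blast
  finally show ?thesis .
qed

definition ymat :: "'a::field mat \<Rightarrow> nat \<Rightarrow> nat \<Rightarrow> 'a mat" where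
  "ymat S Y X = four_block_mat S (1\<^sub>m Y) (1\<^sub>m X) (0\<^sub>m X Y)"

lemma ymat_carrier: "S \<in> carrier_mat Y X \<Longrightarrow> ymat S Y X \<in> carrier_mat (Y + X) (X + Y)"
  unfolding ymat_def by auto

lemma ymat_index:
  assumes S: "S \<in> carrier_mat Y X" and p: "p < Y + X" and q: "q < X + Y"
  shows "ymat S Y X $$ (p,q) = (if p < Y then (if q < X then S $$ (p,q) else (if p = q - X then 1 else 0))
     else (if q < X then (if p - Y = q then 1 else 0) else 0))"
  using S p q unfolding ymat_def by (auto simp: index_mat_four_block)

lemma ymat_inj:
  assumes "S \<in> carrier_mat Y X" "S' \<in> carrier_mat Y X" "ymat S Y X = ymat S' Y X"
  shows "S = S'"
proof (rule eq_matI)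
  fix p q assume "p < dim_row S'" "q < dim_col S'"
  then show "S $$ (p, q) = S' $$ (p, q)"
    using ymat_index[OF assms(1), of p q] ymat_index[OF assms(2), of p q] assms by simp
qed (use assms in auto)

lemma col_rank_ymat_peel_right:
  fixes S :: "'a::field mat"
  assumes S: "S \<in> carrier_mat Y X" and ya: "ya \<le> Y" and xc: "xc \<le> X" and yc: "yc \<le> Y"
  shows "col_rank (\<lambda>p q. ymat S Y X $$ (p,q)) {..<ya} ({xa..<xc} \<union> (\<lambda>p. X + p) ` {..<yc})
    = min ya yc + col_rank (\<lambda>p q. S $$ (p,q)) {yc..<ya} {xa..<xc}"
proof -
  define z where "z = (\<lambda>p q. ymat S Y X $$ (p,q))"
  have zidx: "z p q = (if p < Y then (if q < X then S $$ (p,q) else (if p = q - X then 1 else 0))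
     else (if q < X then (if p - Y = q then 1 else 0) else 0))" if "p < Y + X" "q < X + Y" for p q
    unfolding z_def by (rule ymat_index[OF S that])
  have "{xa..<xc} \<union> (\<lambda>p. X + p) ` {..<yc}
     = {xa..<xc} \<union> (\<lambda>p. X + p) ` {..<min ya yc} \<union> (\<lambda>p. X + p) ` {min ya yc..<yc}"
    by (auto simp: lessThan_atLeast0)
  then have "col_rank z {..<ya} ({xa..<xc} \<union> (\<lambda>p. X + p) ` {..<yc})
     = col_rank z {..<ya} ({xa..<xc} \<union> (\<lambda>p. X + p) ` {..<min ya yc} \<union> (\<lambda>p. X + p) ` {min ya yc..<yc})"
    by simp
  also have "\<dots> = col_rank z {..<ya} ({xa..<xc} \<union> (\<lambda>p. X + p) ` {..<min ya yc})"
  proof (rule col_rank_Un_zero_cols)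
    fix p q assume p: "p \<in> {..<ya}" and q: "q \<in> (\<lambda>p. X + p) ` {min ya yc..<yc}"
    have pq: "p < Y + X" "q < X + Y" using p q ya yc by auto
    show "z p q = 0" using p q ya unfolding zidx[OF pq] by auto
  qed auto
  also have "\<dots> = card ((\<lambda>p. X + p) ` {..<min ya yc}) + col_rank z ({..<ya} - (\<lambda>q. q - X) ` (\<lambda>p. X + p) ` {..<min ya yc})
      ({xa..<xc} \<union> (\<lambda>p. X + p) ` {..<min ya yc} - (\<lambda>p. X + p) ` {..<min ya yc})"
  proof (rule col_rank_unit_cols)
    show "inj_on (\<lambda>q. q - X) ((\<lambda>p. X + p) ` {..<min ya yc})" by (auto simp: inj_on_def)
    show "(\<lambda>q. q - X) ` (\<lambda>p. X + p) ` {..<min ya yc} \<subseteq> {..<ya}" by auto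
    fix q assume q: "q \<in> (\<lambda>p. X + p) ` {..<min ya yc}"
    have pq: "q - X < Y + X" "q < X + Y" using q ya by auto
    show "z (q - X) q \<noteq> 0" using q ya unfolding zidx[OF pq] by auto
    fix p assume p: "p \<in> {..<ya}" "p \<noteq> q - X"
    have pp: "p < Y + X" using p ya by auto
    show "z p q = 0" using p q ya unfolding zidx[OF pp pq(2)] by auto
  qed auto
  also have "card ((\<lambda>p. X + p) ` {..<min ya yc}) = min ya yc" by (simp add: card_image)
  also have "{..<ya} - (\<lambda>q. q - X) ` (\<lambda>p. X + p) ` {..<min ya yc} = {yc..<ya}"
  proof -
    have e: "(\<lambda>q. q - X) ` (\<lambda>p. X + p) ` {..<min ya yc} = {..<min ya yc}" unfolding image_image by simp
    show ?thesis unfolding e by auto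
  qed
  also have "{xa..<xc} \<union> (\<lambda>p. X + p) ` {..<min ya yc} - (\<lambda>p. X + p) ` {..<min ya yc} = {xa..<xc}"
    using xc by auto
  also have "col_rank z {yc..<ya} {xa..<xc} = col_rank (\<lambda>p q. S $$ (p,q)) {yc..<ya} {xa..<xc}"
  proof (rule col_rank_cong)
    fix p q assume "p \<in> {yc..<ya}" "q \<in> {xa..<xc}"
    then have "p < Y" "q < X" using ya xc by auto
    then show "z p q = S $$ (p,q)" using zidx[of p q] by simp
  qed
  finally show ?thesis unfolding z_def .
qed

lemma col_rank_ymat_peel_bottom:
  fixes S :: "'a::field mat"
  assumes S: "S \<in> carrier_mat Y X" and a: "a \<le> Y + X" and c: "c \<le> X + Y"
  shows "col_rank (\<lambda>p q. ymat S Y X $$ (p,q)) ({..<a} \<inter> {..<Y+X}) ({..<c} \<inter> {..<X+Y})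
    = min (a - Y) (min c X)
      + col_rank (\<lambda>p q. ymat S Y X $$ (p,q)) {..<min a Y} ({a - Y..<min c X} \<union> (\<lambda>p. X + p) ` {..<c - X})"
proof -
  define ya where "ya = min a Y"
  define xa where "xa = a - Y"
  define xc where "xc = min c X"
  define yc where "yc = c - X"
  define z where "z = (\<lambda>p q. ymat S Y X $$ (p,q))"
  have zidx: "z p q = (if p < Y then (if q < X then S $$ (p,q) else (if p = q - X then 1 else 0))
     else (if q < X then (if p - Y = q then 1 else 0) else 0))" if "p < Y + X" "q < X + Y" for p q
    unfolding z_def by (rule ymat_index[OF S that])
  have "{..<a} \<inter> {..<Y+X} = ({..<ya} \<union> (\<lambda>q. Y + q) ` {..<min xa xc}) \<union> (\<lambda>q. Y + q) ` {min xa xc..<xa}"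
    using a by (auto simp: lessThan_atLeast0 ya_def xa_def xc_def)
  moreover have "{..<c} \<inter> {..<X+Y} = {..<xc} \<union> (\<lambda>p. X + p) ` {..<yc}"
    using c by (auto simp: lessThan_atLeast0 xc_def yc_def)
  ultimately have "col_rank z ({..<a} \<inter> {..<Y+X}) ({..<c} \<inter> {..<X+Y})
      = col_rank z (({..<ya} \<union> (\<lambda>q. Y + q) ` {..<min xa xc}) \<union> (\<lambda>q. Y + q) ` {min xa xc..<xa}) ({..<xc} \<union> (\<lambda>p. X + p) ` {..<yc})"
    by simp
  also have "col_rank z (({..<ya} \<union> (\<lambda>q. Y + q) ` {..<min xa xc}) \<union> (\<lambda>q. Y + q) ` {min xa xc..<xa}) ({..<xc} \<union> (\<lambda>p. X + p) ` {..<yc})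
      = col_rank z ({..<ya} \<union> (\<lambda>q. Y + q) ` {..<min xa xc}) ({..<xc} \<union> (\<lambda>p. X + p) ` {..<yc})"
  proof (rule col_rank_Un_zero_rows)
    fix p q assume p: "p \<in> (\<lambda>q. Y + q) ` {min xa xc..<xa}" and q: "q \<in> {..<xc} \<union> (\<lambda>p. X + p) ` {..<yc}"
    have "p < Y + X" "q < X + Y" using p q a c unfolding xa_def xc_def yc_def by auto
    then show "z p q = 0" using p q unfolding zidx[OF \<open>p < Y + X\<close> \<open>q < X + Y\<close>] by auto
  qed
  also have "\<dots> = card ((\<lambda>q. Y + q) ` {..<min xa xc}) + col_rank z ({..<ya} \<union> (\<lambda>q. Y + q) ` {..<min xa xc} - (\<lambda>q. Y + q) ` {..<min xa xc})
      ({..<xc} \<union> (\<lambda>p. X + p) ` {..<yc} - (\<lambda>p. p - Y) ` (\<lambda>q. Y + q) ` {..<min xa xc})"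
  proof (rule col_rank_unit_rows)
    show "inj_on (\<lambda>p. p - Y) ((\<lambda>q. Y + q) ` {..<min xa xc})" by (auto simp: inj_on_def)
    show "(\<lambda>p. p - Y) ` (\<lambda>q. Y + q) ` {..<min xa xc} \<subseteq> {..<xc} \<union> (\<lambda>p. X + p) ` {..<yc}" by auto
    fix p assume p: "p \<in> (\<lambda>q. Y + q) ` {..<min xa xc}"
    have pq: "p < Y + X" "p - Y < X + Y" using p a unfolding xa_def xc_def by auto
    show "z p (p - Y) \<noteq> 0" using p unfolding zidx[OF pq] xc_def by auto
    fix q assume q: "q \<in> {..<xc} \<union> (\<lambda>p. X + p) ` {..<yc}" "q \<noteq> p - Y"
    have qq: "q < X + Y" using q c unfolding xc_def yc_def by auto
    show "z p q = 0" using p q unfolding zidx[OF pq(1) qq] xc_def by auto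
  qed auto
  also have "card ((\<lambda>q. Y + q) ` {..<min xa xc}) = min xa xc" by (simp add: card_image)
  also have "{..<ya} \<union> (\<lambda>q. Y + q) ` {..<min xa xc} - (\<lambda>q. Y + q) ` {..<min xa xc} = {..<ya}"
    unfolding ya_def by auto
  also have "{..<xc} \<union> (\<lambda>p. X + p) ` {..<yc} - (\<lambda>p. p - Y) ` (\<lambda>q. Y + q) ` {..<min xa xc}
     = {xa..<xc} \<union> (\<lambda>p. X + p) ` {..<yc}"
    unfolding image_image by (auto simp: lessThan_atLeast0 xc_def)
  finally show ?thesis unfolding ya_def xa_def xc_def yc_def z_def .
qed

lemma mrank_ymat_leading:
  fixes S :: "'a::field mat"
  assumes S: "S \<in> carrier_mat Y X" and a: "a \<le> Y + X" and c: "c \<le> X + Y"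
  shows "mrank (submatrix (ymat S Y X) {..<a} {..<c}) =
     min (min a Y) (c - X) + min (a - Y) (min c X) +
     col_rank (\<lambda>p q. S $$ (p,q)) {c - X..<min a Y} {a - Y..<min c X}"
proof -
  have "mrank (submatrix (ymat S Y X) {..<a} {..<c})
      = col_rank (\<lambda>p q. ymat S Y X $$ (p,q)) ({..<a} \<inter> {..<Y+X}) ({..<c} \<inter> {..<X+Y})"
    unfolding mrank_submatrix using carrier_matD[OF ymat_carrier[OF S]] by simp
  also have "\<dots> = min (a - Y) (min c X) + (min (min a Y) (c - X) +
      col_rank (\<lambda>p q. S $$ (p,q)) {c - X..<min a Y} {a - Y..<min c X})"
    unfolding col_rank_ymat_peel_bottom[OF S a c]
    using col_rank_ymat_peel_right[OF S, of "min a Y" "min c X" "c - X" "a - Y"] c by simp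
  finally show ?thesis by (simp add: ac_simps)
qed

abbreviation yblock :: "(nat \<Rightarrow> nat) \<Rightarrow> nat \<Rightarrow> nat set" where
  "yblock dy k \<equiv> {yoff dy k..<yoff dy (Suc k)}"

abbreviation xblock :: "nat \<Rightarrow> (nat \<Rightarrow> nat) \<Rightarrow> nat \<Rightarrow> nat set" where
  "xblock n dx i \<equiv> {xoff n dx i..<xoff n dx i + dx i}"

lemma yoff_0: "yoff dy 0 = 0"
  unfolding yoff_def by simp

lemma yoff_Suc: "yoff dy (Suc k) = yoff dy k + dy k"
  unfolding yoff_def by simp

lemma yoff_mono: "i \<le> j \<Longrightarrow> yoff dy i \<le> yoff dy j"
  unfolding yoff_def by (rule sum_mono2) auto

lemma yblock_unique:
  assumes "p \<in> yblock dy k" "p \<in> yblock dy k'"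
  shows "k = k'"
proof (rule ccontr)
  assume "k \<noteq> k'"
  then have "Suc k \<le> k' \<or> Suc k' \<le> k" by arith
  then show False
    using yoff_mono[of "Suc k" k' dy] yoff_mono[of "Suc k'" k dy] assms by auto
qed

lemma mem_yoff_interval_iff:
  "p \<in> {yoff dy b..<yoff dy e} \<longleftrightarrow> (\<exists>k. b \<le> k \<and> k < e \<and> p \<in> yblock dy k)"
proof (induction e)
  case 0
  then show ?case using yoff_mono[of 0 b dy] by auto
next
  case (Suc e)
  show ?case
  proof (cases "b \<le> e")
    case True
    have "p \<in> {yoff dy b..<yoff dy (Suc e)} \<longleftrightarrow> p \<in> {yoff dy b..<yoff dy e} \<or> p \<in> {yoff dy e..<yoff dy (Suc e)}"
      using yoff_mono[OF True, of dy] yoff_mono[of e "Suc e" dy] by auto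
    also have "\<dots> \<longleftrightarrow> (\<exists>k. b \<le> k \<and> k < Suc e \<and> p \<in> yblock dy k)"
      unfolding Suc.IH using True less_Suc_eq by auto
    finally show ?thesis .
  next
    case False
    then show ?thesis using yoff_mono[of "Suc e" b dy] by auto
  qed
qed

lemma dimY_yoff: "dimY n dy = yoff dy (Suc n)"
  unfolding dimY_def yoff_def by (simp add: lessThan_Suc_atMost)

lemma ex_yblock: "p < dimY n dy \<Longrightarrow> \<exists>k. k \<le> n \<and> p \<in> yblock dy k"
proof -
  assume p: "p < dimY n dy"
  have "p \<in> {yoff dy 0..<yoff dy (Suc n)}" using p unfolding dimY_yoff yoff_0 by simp
  then obtain k where "k < Suc n" "p \<in> yblock dy k" using mem_yoff_interval_iff[THEN iffD1] by blast
  then show ?thesis by (intro exI[of _ k]) simp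
qed

lemma xoff_n [simp]: "xoff n dx n = 0"
  unfolding xoff_def by simp

lemma xoff_eq_Suc: "i < n \<Longrightarrow> xoff n dx i = xoff n dx (Suc i) + dx (Suc i)"
proof -
  assume "i < n"
  then have "{i<..n} = insert (Suc i) {Suc i<..n}" by auto
  then show ?thesis unfolding xoff_def by simp
qed

lemma xoff_anti: "i \<le> j \<Longrightarrow> xoff n dx j \<le> xoff n dx i"
  unfolding xoff_def by (rule sum_mono2) auto

lemma xoff_add_dx: "1 \<le> i \<Longrightarrow> i \<le> n \<Longrightarrow> xoff n dx i + dx i = xoff n dx (i - 1)"
  using xoff_eq_Suc[of "i - 1" n dx] by simp

lemma xblock_unique:
  assumes "q \<in> xblock n dx i" "q \<in> xblock n dx i'"
    "1 \<le> i" "i \<le> n" "1 \<le> i'" "i' \<le> n"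
  shows "i = i'"
proof (rule ccontr)
  assume "i \<noteq> i'"
  then have "i \<le> i' - 1 \<or> i' \<le> i - 1" by arith
  then show False
    using xoff_anti[of i "i' - 1" n dx] xoff_anti[of i' "i - 1" n dx] assms xoff_add_dx[of i n dx]
      xoff_add_dx[of i' n dx] by auto
qed

lemma mem_xoff_interval_iff:
  "t1 \<le> n \<Longrightarrow> q \<in> {xoff n dx t1..<xoff n dx t2} \<longleftrightarrow> (\<exists>i. t2 < i \<and> i \<le> t1 \<and> q \<in> xblock n dx i)"
proof (induction t1)
  case 0
  then show ?case using xoff_anti[of 0 t2 n dx] by auto
next
  case (Suc t1)
  show ?case
  proof (cases "t2 \<le> t1")
    case True
    have r: "xoff n dx t1 = xoff n dx (Suc t1) + dx (Suc t1)" using xoff_eq_Suc[of t1 n dx] Suc.prems by simp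
    have "q \<in> {xoff n dx (Suc t1)..<xoff n dx t2} \<longleftrightarrow> q \<in> {xoff n dx (Suc t1)..<xoff n dx (Suc t1) + dx (Suc t1)} \<or> q \<in> {xoff n dx t1..<xoff n dx t2}"
      using xoff_anti[OF True, of n dx] r by auto
    also have "\<dots> \<longleftrightarrow> (\<exists>i. t2 < i \<and> i \<le> Suc t1 \<and> q \<in> xblock n dx i)"
      (is "?A \<or> ?B \<longleftrightarrow> ?C")
    proof
      assume "?A \<or> ?B"
      then show ?C
      proof
        assume ?A then show ?C using True by (intro exI[of _ "Suc t1"]) auto
      next
        assume ?B then show ?C unfolding Suc.IH[OF Suc_leD[OF Suc.prems]] by (auto simp: le_Suc_eq)
      qed
    next
      assume ?C
      then obtain i where i: "t2 < i" "i \<le> Suc t1" "q \<in> xblock n dx i" by blast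
      show "?A \<or> ?B"
      proof (cases "i = Suc t1")
        case True then show ?thesis using i by simp
      next
        case False
        then have "i \<le> t1" using i(2) by simp
        then have ?B unfolding Suc.IH[OF Suc_leD[OF Suc.prems]] using i by blast
        then show ?thesis ..
      qed
    qed
    finally show ?thesis .
  next
    case False
    then show ?thesis using xoff_anti[of "Suc t1" t2 n dx] by auto
  qed
qed

lemma dimX_xoff: "dimX n dx = xoff n dx 0"
  unfolding dimX_def xoff_def by (rule sum.cong) auto

lemma ex_xblock: "q < dimX n dx \<Longrightarrow> \<exists>i. 1 \<le> i \<and> i \<le> n \<and> q \<in> xblock n dx i"
proof -
  assume q: "q < dimX n dx"
  have "q \<in> {xoff n dx n..<xoff n dx 0}" using q unfolding dimX_xoff by simp
  then obtain i where "0 < i" "i \<le> n" "q \<in> xblock n dx i" using mem_xoff_interval_iff[OF order_refl, THEN iffD1] by blast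
  then show ?thesis by (intro exI[of _ i]) simp
qed

lemma sum_list_take_dy: "i \<le> Suc n \<Longrightarrow> sum_list (take i (map dy [0..<Suc n])) = yoff dy i"
proof -
  assume i: "i \<le> Suc n"
  have "take i (map dy [0..<Suc n]) = map dy [0..<i]" using i by (simp add: take_map take_upt del: upt_Suc)
  moreover have "sum_list (map dy [0..<i]) = yoff dy i" by (induction i) (simp_all add: yoff_def upt_Suc)
  ultimately show ?thesis by simp
qed

lemma sum_list_take_dx: "a \<le> n \<Longrightarrow> sum_list (take a (map dx (rev [1..<Suc n]))) = xoff n dx (n - a)"
proof (induction a)
  case 0 then show ?case by simp
next
  case (Suc a)
  have "rev [1..<Suc n] ! a = n - a" using Suc.prems by (simp add: rev_nth del: upt_Suc)
  then have "take (Suc a) (map dx (rev [1..<Suc n])) = take a (map dx (rev [1..<Suc n])) @ [dx (n - a)]"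
    using Suc.prems by (simp add: take_Suc_conv_app_nth del: upt_Suc)
  moreover have "xoff n dx (n - Suc a) = xoff n dx (n - a) + dx (n - a)"
    using xoff_eq_Suc[of "n - Suc a" n dx] Suc.prems by (simp add: Suc_diff_Suc)
  ultimately show ?case using Suc by simp
qed

text \<open>The first \<open>i\<close> block rows of \<open>\<zeta>(V)\<close> are those of \<open>y\<^sub>0, \<dots>, y\<^sub>e\<^sub>-\<^sub>1\<close> followed by those of
  \<open>x\<^sub>n, \<dots>, x\<^sub>t\<^sub>+\<^sub>1\<close>, where \<open>e = row_ycount n i\<close> and \<open>t = row_xbound n i\<close>; the first \<open>j\<close> block columns are
  those of \<open>x\<^sub>n, \<dots>, x\<^sub>t\<^sub>+\<^sub>1\<close> followed by those of \<open>y\<^sub>0, \<dots>, y\<^sub>b\<^sub>-\<^sub>1\<close>, where \<open>t = col_xbound n j\<close> and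
  \<open>b = col_ycount n j\<close>.\<close>

definition row_ycount :: "nat \<Rightarrow> nat \<Rightarrow> nat" where "row_ycount n i = min i (Suc n)"
definition row_xbound :: "nat \<Rightarrow> nat \<Rightarrow> nat" where "row_xbound n i = (if i \<le> Suc n then n else 2*n+1-i)"
definition col_ycount :: "nat \<Rightarrow> nat \<Rightarrow> nat" where "col_ycount n j = j - n"
definition col_xbound :: "nat \<Rightarrow> nat \<Rightarrow> nat" where "col_xbound n j = n - min j n"

definition corner_rank :: "nat \<Rightarrow> (nat \<Rightarrow> nat) \<Rightarrow> (nat \<Rightarrow> nat) \<Rightarrow> 'a::field mat \<Rightarrow> nat \<Rightarrow> nat \<Rightarrow> nat" where
  "corner_rank n dx dy S i j = col_rank (\<lambda>p q. S $$ (p,q))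
     {yoff dy (col_ycount n j)..<yoff dy (row_ycount n i)} {xoff n dx (row_xbound n i)..<xoff n dx (col_xbound n j)}"

lemma row_bounds: "row_ycount n i \<le> Suc n" "row_xbound n i \<le> n"
  by (auto simp: row_ycount_def row_xbound_def)

lemma sum_take_row_blocks:
  assumes "i \<le> 2*n+1"
  shows "sum_list (take i (row_blocks n dx dy)) = yoff dy (row_ycount n i) + xoff n dx (row_xbound n i)"
proof -
  have "sum_list (take i (row_blocks n dx dy)) = sum_list (take i (map dy [0..<Suc n])) + sum_list (take (i - Suc n) (map dx (rev [1..<Suc n])))"
    unfolding row_blocks_def by (simp del: upt_Suc)
  also have "\<dots> = yoff dy (row_ycount n i) + xoff n dx (row_xbound n i)"
  proof (cases "i \<le> Suc n")
    case True then show ?thesis using sum_list_take_dy[OF True] by (simp add: row_ycount_def row_xbound_def)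
  next
    case False
    have "take i (map dy [0..<Suc n]) = map dy [0..<Suc n]" using False by (simp del: upt_Suc)
    then have "sum_list (take i (map dy [0..<Suc n])) = yoff dy (Suc n)" using sum_list_take_dy[of "Suc n" n dy] by (simp del: upt_Suc)
    moreover have "sum_list (take (i - Suc n) (map dx (rev [1..<Suc n]))) = xoff n dx (n - (i - Suc n))"
      using sum_list_take_dx[of "i - Suc n" n dx] assms by (simp del: upt_Suc)
    moreover have "n - (i - Suc n) = 2*n+1-i" using False assms by (simp del: upt_Suc)
    ultimately show ?thesis using False by (simp add: row_ycount_def row_xbound_def)
  qed
  finally show ?thesis .
qed

lemma sum_take_col_blocks:
  assumes "j \<le> 2*n+1"
  shows "sum_list (take j (col_blocks n dx dy)) = xoff n dx (col_xbound n j) + yoff dy (col_ycount n j)"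
proof -
  have "sum_list (take j (col_blocks n dx dy)) = sum_list (take j (map dx (rev [1..<Suc n]))) + sum_list (take (j - n) (map dy [0..<Suc n]))"
    unfolding col_blocks_def by (simp del: upt_Suc)
  also have "\<dots> = xoff n dx (col_xbound n j) + yoff dy (col_ycount n j)"
  proof (cases "j \<le> n")
    case True then show ?thesis using sum_list_take_dx[OF True] by (simp add: col_ycount_def col_xbound_def yoff_def)
  next
    case False
    have "take j (map dx (rev [1..<Suc n])) = map dx (rev [1..<Suc n])" using False by (simp del: upt_Suc)
    then have "sum_list (take j (map dx (rev [1..<Suc n]))) = xoff n dx 0" using sum_list_take_dx[of n n dx] by (simp del: upt_Suc)
    moreover have "sum_list (take (j - n) (map dy [0..<Suc n])) = yoff dy (j - n)"
      using sum_list_take_dy[of "j - n" n dy] assms by (simp del: upt_Suc)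
    ultimately show ?thesis using False by (simp add: col_ycount_def col_xbound_def)
  qed
  finally show ?thesis .
qed

lemma yoff_le_dimY: "k \<le> Suc n \<Longrightarrow> yoff dy k \<le> dimY n dy"
  using yoff_mono[of k "Suc n" dy] unfolding dimY_yoff .

lemma xoff_le_dimX: "xoff n dx t \<le> dimX n dx"
  using xoff_anti[of 0 t n dx] unfolding dimX_xoff by simp

lemma leading_rows_split:
  fixes n i :: nat and dx dy :: "nat \<Rightarrow> nat"
  defines "a \<equiv> yoff dy (row_ycount n i) + xoff n dx (row_xbound n i)"
  shows "min a (dimY n dy) = yoff dy (row_ycount n i)" "a - dimY n dy = xoff n dx (row_xbound n i)"
proof -
  have "row_ycount n i = Suc n \<or> xoff n dx (row_xbound n i) = 0"
    by (auto simp: row_ycount_def row_xbound_def)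
  then show "min a (dimY n dy) = yoff dy (row_ycount n i)" "a - dimY n dy = xoff n dx (row_xbound n i)"
    using yoff_le_dimY[OF row_bounds(1)] unfolding a_def dimY_yoff by auto
qed

lemma leading_cols_split:
  fixes n j :: nat and dx dy :: "nat \<Rightarrow> nat"
  defines "c \<equiv> xoff n dx (col_xbound n j) + yoff dy (col_ycount n j)"
  shows "min c (dimX n dx) = xoff n dx (col_xbound n j)" "c - dimX n dx = yoff dy (col_ycount n j)"
proof -
  have "col_xbound n j = 0 \<or> col_ycount n j = 0"
    by (auto simp: col_xbound_def col_ycount_def)
  then show "min c (dimX n dx) = xoff n dx (col_xbound n j)" "c - dimX n dx = yoff dy (col_ycount n j)"
    using xoff_le_dimX[of n dx "col_xbound n j"] unfolding c_def dimX_xoff by (auto simp: yoff_def)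
qed

lemma mrank_topleft_ymat:
  fixes S :: "'a::field mat"
  assumes S: "S \<in> carrier_mat (dimY n dy) (dimX n dx)" and i: "i \<le> 2*n+1" and j: "j \<le> 2*n+1"
  shows "mrank (topleft n dx dy (ymat S (dimY n dy) (dimX n dx)) i j) =
    min (yoff dy (row_ycount n i)) (yoff dy (col_ycount n j))
    + min (xoff n dx (row_xbound n i)) (xoff n dx (col_xbound n j)) + corner_rank n dx dy S i j"
proof -
  let ?Y = "dimY n dy" and ?X = "dimX n dx"
  define a where "a = yoff dy (row_ycount n i) + xoff n dx (row_xbound n i)"
  define c where "c = xoff n dx (col_xbound n j) + yoff dy (col_ycount n j)"
  note rows = leading_rows_split[where n = n and i = i and dy = dy and dx = dx, folded a_def]
  note cols = leading_cols_split[where n = n and j = j and dy = dy and dx = dx, folded c_def]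
  have "yoff dy (row_ycount n i) \<le> ?Y" by (rule yoff_le_dimY[OF row_bounds(1)])
  moreover have "yoff dy (col_ycount n j) \<le> ?Y" using j by (intro yoff_le_dimY) (simp add: col_ycount_def)
  ultimately have ac: "a \<le> ?Y + ?X" "c \<le> ?X + ?Y"
    using xoff_le_dimX[of n dx "row_xbound n i"] xoff_le_dimX[of n dx "col_xbound n j"]
    unfolding a_def c_def by linarith+
  have "topleft n dx dy (ymat S ?Y ?X) i j = submatrix (ymat S ?Y ?X) {..<a} {..<c}"
    unfolding topleft_def a_def c_def sum_take_row_blocks[OF i] sum_take_col_blocks[OF j] ..
  then show ?thesis
    using mrank_ymat_leading[OF S ac] unfolding rows cols corner_rank_def by (simp add: min.commute)
qed

lemma mrank_topleft_ymat_eq_iff: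
  fixes S S' :: "'a::field mat"
  assumes "S \<in> carrier_mat (dimY n dy) (dimX n dx)" "S' \<in> carrier_mat (dimY n dy) (dimX n dx)"
    and "i \<le> 2*n+1" "j \<le> 2*n+1"
  shows "mrank (topleft n dx dy (ymat S (dimY n dy) (dimX n dx)) i j)
      = mrank (topleft n dx dy (ymat S' (dimY n dy) (dimX n dx)) i j)
    \<longleftrightarrow> corner_rank n dx dy S i j = corner_rank n dx dy S' i j"
  using mrank_topleft_ymat[OF assms(1,3,4)] mrank_topleft_ymat[OF assms(2,3,4)] by simp
definition arrow_supported :: "nat \<Rightarrow> (nat \<Rightarrow> nat) \<Rightarrow> (nat \<Rightarrow> nat) \<Rightarrow> (nat \<Rightarrow> nat \<Rightarrow> 'a::zero) \<Rightarrow> bool" where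
  "arrow_supported n dx dy m \<longleftrightarrow> (\<forall>p q. p < dimY n dy \<longrightarrow> q < dimX n dx \<longrightarrow> m p q \<noteq> 0 \<longrightarrow>
     (\<exists>k i. 1 \<le> i \<and> i \<le> n \<and> (k = i - 1 \<or> k = i) \<and> p \<in> yblock dy k \<and>
        q \<in> xblock n dx i))"

definition interval_rows :: "nat \<Rightarrow> (nat \<Rightarrow> nat) \<Rightarrow> nat \<times> nat \<Rightarrow> nat set" where
  "interval_rows n dy J = (\<Union>i\<in>{i. i \<le> n \<and> fst J \<le> 2 * i \<and> 2 * i \<le> snd J}. yblock dy i)"

definition interval_cols :: "nat \<Rightarrow> (nat \<Rightarrow> nat) \<Rightarrow> nat \<times> nat \<Rightarrow> nat set" where
  "interval_cols n dx J = (\<Union>i\<in>{i. 1 \<le> i \<and> i \<le> n \<and> fst J \<le> 2 * i - 1 \<and> 2 * i - 1 \<le> snd J}.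
          xblock n dx i)"

lemma MJ_eq_submatrix: "MJ n dx dy V J = submatrix (MQ n dx dy V) (interval_rows n dy J) (interval_cols n dx J)"
  unfolding MJ_def interval_rows_def interval_cols_def ..

lemma MQ_dims: "dim_row (MQ n dx dy V) = dimY n dy" "dim_col (MQ n dx dy V) = dimX n dx"
  unfolding MQ_def by simp_all

lemma interval_rows_subset: "interval_rows n dy J \<subseteq> {..<dimY n dy}"
proof
  fix p assume "p \<in> interval_rows n dy J"
  then obtain i where i: "i \<le> n" "p < yoff dy (Suc i)" unfolding interval_rows_def by auto
  then show "p \<in> {..<dimY n dy}" using yoff_mono[of "Suc i" "Suc n" dy] unfolding dimY_yoff by simp
qed

lemma interval_cols_subset: "interval_cols n dx J \<subseteq> {..<dimX n dx}"
proof
  fix q assume "q \<in> interval_cols n dx J"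
  then obtain i where i: "1 \<le> i" "i \<le> n" "q < xoff n dx i + dx i" unfolding interval_cols_def by auto
  then show "q \<in> {..<dimX n dx}" using xoff_anti[of 0 "i - 1" n dx] xoff_add_dx[of i n dx] unfolding dimX_xoff by simp
qed

lemma mrank_MJ: "mrank (MJ n dx dy V J) = col_rank (\<lambda>p q. MQ n dx dy V $$ (p,q)) (interval_rows n dy J) (interval_cols n dx J)"
proof -
  have "interval_rows n dy J \<inter> {..<dimY n dy} = interval_rows n dy J" "interval_cols n dx J \<inter> {..<dimX n dx} = interval_cols n dx J"
    using interval_rows_subset interval_cols_subset by blast+
  then show ?thesis unfolding MJ_eq_submatrix mrank_submatrix MQ_dims by simp
qed

lemma mem_yoff_interval_yblock: "p \<in> yblock dy k \<Longrightarrow> p \<in> {yoff dy b..<yoff dy e} \<longleftrightarrow> b \<le> k \<and> k < e"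
  using mem_yoff_interval_iff[of p dy b e] yblock_unique[of p dy k] by blast

lemma mem_interval_rows: "p \<in> yblock dy k \<Longrightarrow> p \<in> interval_rows n dy J \<longleftrightarrow> k \<le> n \<and> fst J \<le> 2 * k \<and> 2 * k \<le> snd J"
  unfolding interval_rows_def using yblock_unique[of p dy k] by blast

lemma mem_xoff_interval_xblock:
  assumes "t1 \<le> n" "1 \<le> i" "i \<le> n" "q \<in> xblock n dx i"
  shows "q \<in> {xoff n dx t1..<xoff n dx t2} \<longleftrightarrow> t2 < i \<and> i \<le> t1"
proof
  assume "q \<in> {xoff n dx t1..<xoff n dx t2}"
  then obtain i' where i': "t2 < i'" "i' \<le> t1" "q \<in> xblock n dx i'"
    using mem_xoff_interval_iff[OF assms(1)] by blast
  have "i' = i" by (rule xblock_unique[OF i'(3) assms(4)]) (use i' assms in auto)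
  then show "t2 < i \<and> i \<le> t1" using i' by simp
next
  assume "t2 < i \<and> i \<le> t1"
  then show "q \<in> {xoff n dx t1..<xoff n dx t2}" using mem_xoff_interval_iff[OF assms(1)] assms(4) by blast
qed

lemma mem_interval_cols:
  assumes "1 \<le> i" "i \<le> n" "q \<in> xblock n dx i"
  shows "q \<in> interval_cols n dx J \<longleftrightarrow> fst J \<le> 2 * i - 1 \<and> 2 * i - 1 \<le> snd J"
proof
  assume "q \<in> interval_cols n dx J"
  then obtain i' where i': "1 \<le> i'" "i' \<le> n" "fst J \<le> 2 * i' - 1" "2 * i' - 1 \<le> snd J"
    "q \<in> xblock n dx i'" unfolding interval_cols_def by blast
  have "i' = i" by (rule xblock_unique[OF i'(5) assms(3) i'(1,2) assms(1,2)])
  then show "fst J \<le> 2 * i - 1 \<and> 2 * i - 1 \<le> snd J" using i' by simp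
next
  assume "fst J \<le> 2 * i - 1 \<and> 2 * i - 1 \<le> snd J"
  then show "q \<in> interval_cols n dx J" unfolding interval_cols_def using assms by blast
qed

text \<open>The rows of \<open>y\<^sub>b, \<dots>, y\<^sub>e\<^sub>-\<^sub>1\<close> and the columns of \<open>x\<^sub>t\<^sub>1, \<dots>, x\<^sub>t\<^sub>2\<^sub>+\<^sub>1\<close> (positions \<open>2k\<close> and
  \<open>2i - 1\<close>) meet the arrow blocks of \<open>M\<^sub>Q\<close> exactly in those of this interval; it is empty
  when its ends are in the wrong order.\<close>
definition rect_interval :: "nat \<Rightarrow> nat \<Rightarrow> nat \<Rightarrow> nat \<Rightarrow> nat \<times> nat" where
  "rect_interval b e t1 t2 = (max (2*b-1) (2*t2), min (2*e-1) (2*t1))"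

lemma rect_interval_arith:
  fixes i n k e t1 b t2 :: nat
  assumes "1 \<le> i" "i \<le> n" "k = i - 1 \<or> k = i" "e \<le> Suc n" "t1 \<le> n"
  shows "(b \<le> k \<and> k < e \<and> t2 < i \<and> i \<le> t1) \<longleftrightarrow>
    (k \<le> n \<and> max (2*b-1) (2*t2) \<le> 2 * k \<and> 2 * k \<le> min (2*e-1) (2*t1) \<and>
     max (2*b-1) (2*t2) \<le> 2 * i - 1 \<and> 2 * i - 1 \<le> min (2*e-1) (2*t1))"
  using assms(3)
proof
  assume k: "k = i - 1"
  show ?thesis unfolding k using assms(1,2,4,5) by (simp only: max.bounded_iff min.bounded_iff) (intro iffI; elim conjE; intro conjI TrueI; linarith)
next
  assume k: "k = i"
  show ?thesis unfolding k using assms(1,2,4,5) by (simp only: max.bounded_iff min.bounded_iff) (intro iffI; elim conjE; intro conjI TrueI; linarith)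
qed

lemma mem_rect_iff_mem_rect_interval:
  assumes "e \<le> Suc n" "t1 \<le> n" "1 \<le> i" "i \<le> n" "k = i - 1 \<or> k = i"
    and p: "p \<in> yblock dy k" and q: "q \<in> xblock n dx i"
  shows "(p \<in> {yoff dy b..<yoff dy e} \<and> q \<in> {xoff n dx t1..<xoff n dx t2}) \<longleftrightarrow>
    (p \<in> interval_rows n dy (rect_interval b e t1 t2) \<and> q \<in> interval_cols n dx (rect_interval b e t1 t2))"
  unfolding mem_yoff_interval_yblock[OF p] mem_interval_rows[OF p]
    mem_xoff_interval_xblock[OF assms(2-4) q] mem_interval_cols[OF assms(3,4) q]
  using rect_interval_arith[OF assms(3-5,1,2), of b t2] unfolding rect_interval_def by simp

lemma yoff_interval_lt_dimY: "e \<le> Suc n \<Longrightarrow> p \<in> {yoff dy b..<yoff dy e} \<Longrightarrow> p < dimY n dy"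
  using yoff_mono[of e "Suc n" dy] unfolding dimY_yoff by auto

lemma xoff_interval_lt_dimX: "q \<in> {xoff n dx t1..<xoff n dx t2} \<Longrightarrow> q < dimX n dx"
  using xoff_anti[of 0 t2 n dx] unfolding dimX_xoff by auto

lemma col_rank_rect:
  assumes sp: "arrow_supported n dx dy m" and e: "e \<le> Suc n" and t1: "t1 \<le> n"
  shows "col_rank m {yoff dy b..<yoff dy e} {xoff n dx t1..<xoff n dx t2} =
    col_rank m (interval_rows n dy (rect_interval b e t1 t2)) (interval_cols n dx (rect_interval b e t1 t2))"
proof (rule col_rank_eq_if_same_support)
  let ?J = "rect_interval b e t1 t2"
  have supE: "\<exists>k i. 1 \<le> i \<and> i \<le> n \<and> (k = i - 1 \<or> k = i) \<and> p \<in> yblock dy k \<and> q \<in> xblock n dx i"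
    if "p < dimY n dy" "q < dimX n dx" "m p q \<noteq> 0" for p q
    using sp that unfolding arrow_supported_def by blast
  show "finite {xoff n dx t1..<xoff n dx t2}" by simp
  show "finite (interval_cols n dx ?J)" by (rule finite_subset[OF interval_cols_subset]) simp
  fix p q assume pq: "p \<in> {yoff dy b..<yoff dy e}" "q \<in> {xoff n dx t1..<xoff n dx t2}" "m p q \<noteq> 0"
  then obtain k i where ki: "1 \<le> i" "i \<le> n" "k = i - 1 \<or> k = i" "p \<in> yblock dy k" "q \<in> xblock n dx i"
    using supE yoff_interval_lt_dimY[OF e] xoff_interval_lt_dimX by blast
  show "p \<in> interval_rows n dy ?J \<and> q \<in> interval_cols n dx ?J"
    using mem_rect_iff_mem_rect_interval[OF e t1 ki] pq by blast
next
  let ?J = "rect_interval b e t1 t2"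
  fix p q assume pq: "p \<in> interval_rows n dy ?J" "q \<in> interval_cols n dx ?J" "m p q \<noteq> 0"
  then obtain k i where ki: "1 \<le> i" "i \<le> n" "k = i - 1 \<or> k = i" "p \<in> yblock dy k" "q \<in> xblock n dx i"
    using sp interval_rows_subset interval_cols_subset unfolding arrow_supported_def by blast
  show "p \<in> {yoff dy b..<yoff dy e} \<and> q \<in> {xoff n dx t1..<xoff n dx t2}"
    using mem_rect_iff_mem_rect_interval[OF e t1 ki] pq by blast
qed

lemma interval_rows_empty: "snd J < fst J \<Longrightarrow> interval_rows n dy J = {}"
  unfolding interval_rows_def by auto

lemma MQ_carrier: "MQ n dx dy V \<in> carrier_mat (dimY n dy) (dimX n dx)"
  unfolding MQ_def by simp

lemma zeta_eq_ymat: "zeta n dx dy V = ymat (MQ n dx dy V) (dimY n dy) (dimX n dx)"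
  unfolding zeta_def ymat_def ..

lemma yblock_lt_dimY: "p \<in> yblock dy k \<Longrightarrow> k \<le> n \<Longrightarrow> p < dimY n dy"
  using yoff_mono[of "Suc k" "Suc n" dy] unfolding dimY_yoff by simp

lemma xblock_lt_dimX: "q \<in> xblock n dx i \<Longrightarrow> 1 \<le> i \<Longrightarrow> i \<le> n \<Longrightarrow> q < dimX n dx"
  using xoff_anti[of 0 "i - 1" n dx] xoff_add_dx[of i n dx] unfolding dimX_xoff by simp

lemma blk_arrow_block:
  assumes A: "A \<in> carrier_mat (dy k') (dx i')" and p: "p \<in> yblock dy k" and q: "q \<in> xblock n dx i"
    and i: "1 \<le> i" "i \<le> n" "1 \<le> i'" "i' \<le> n"
  shows "blk (yoff dy k') (xoff n dx i') A p q = (if k = k' \<and> i = i' then A $$ (p - yoff dy k', q - xoff n dx i) else 0)"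
proof (cases "k = k' \<and> i = i'")
  case True
  then show ?thesis using A p q unfolding blk_def by (auto simp: yoff_Suc)
next
  case False
  then have "p \<notin> yblock dy k' \<or> q \<notin> xblock n dx i'"
    using yblock_unique[OF p] xblock_unique[OF q _ i] by blast
  then show ?thesis using A False unfolding blk_def by (auto simp: yoff_Suc)
qed

lemma MQ_index:
  assumes V: "V \<in> rep n dx dy" and k: "k \<le> n" "p \<in> yblock dy k" and i: "1 \<le> i" "i \<le> n" "q \<in> xblock n dx i"
  shows "MQ n dx dy V $$ (p,q) =
    (if k = i - 1 then fst V i $$ (p - yoff dy (i - 1), q - xoff n dx i) else 0)
    + (if k = i then snd V i $$ (p - yoff dy i, q - xoff n dx i) else 0)"
proof -
  define T where "T i' = blk (yoff dy (i' - 1)) (xoff n dx i') (fst V i') p q + blk (yoff dy i') (xoff n dx i') (snd V i') p q" for i'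
  have T: "T i' = (if i = i' then (if k = i - 1 then fst V i $$ (p - yoff dy (i - 1), q - xoff n dx i) else 0)
    + (if k = i then snd V i $$ (p - yoff dy i, q - xoff n dx i) else 0) else 0)" if "i' \<in> {1..n}" for i'
  proof -
    have i': "1 \<le> i'" "i' \<le> n" using that by auto
    have "fst V i' \<in> carrier_mat (dy (i' - 1)) (dx i')" "snd V i' \<in> carrier_mat (dy i') (dx i')"
      using V that unfolding rep_def by auto
    from this[THEN blk_arrow_block[OF _ k(2) i(3) i(1,2) i']] show ?thesis
      unfolding T_def using i(1) by auto
  qed
  have "MQ n dx dy V $$ (p,q) = (\<Sum>i'\<in>{1..n}. T i')"
    unfolding MQ_def T_def using yblock_lt_dimY[OF k(2,1)] xblock_lt_dimX[OF i(3,1,2)] by simp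
  also have "\<dots> = (\<Sum>i'\<in>{1..n}. if i = i' then T i else 0)"
    using T by (intro sum.cong) auto
  finally show ?thesis using T[of i] i by simp
qed

lemma arrow_supported_MQ:
  assumes V: "V \<in> rep n dx dy"
  shows "arrow_supported n dx dy (\<lambda>p q. MQ n dx dy V $$ (p,q))"
  unfolding arrow_supported_def
proof (intro allI impI)
  fix p q assume p: "p < dimY n dy" and q: "q < dimX n dx" and nz: "MQ n dx dy V $$ (p,q) \<noteq> 0"
  obtain k where k: "k \<le> n" "p \<in> yblock dy k" using ex_yblock[OF p] by blast
  obtain i where i: "1 \<le> i" "i \<le> n" "q \<in> xblock n dx i" using ex_xblock[OF q] by blast
  have "k = i - 1 \<or> k = i" using nz unfolding MQ_index[OF V k i] by (auto split: if_split_asm)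
  then show "\<exists>k i. 1 \<le> i \<and> i \<le> n \<and> (k = i - 1 \<or> k = i) \<and> p \<in> yblock dy k \<and> q \<in> xblock n dx i"
    using k i by blast
qed

definition arrow_blocks :: "nat \<Rightarrow> (nat \<Rightarrow> nat) \<Rightarrow> (nat \<Rightarrow> nat) \<Rightarrow> 'a::field mat \<Rightarrow> 'a qrep" where
  "arrow_blocks n dx dy S =
    (\<lambda>i. mat (dy (i - 1)) (dx i) (\<lambda>(a, c). S $$ (yoff dy (i - 1) + a, xoff n dx i + c)),
     \<lambda>i. mat (dy i) (dx i) (\<lambda>(a, c). S $$ (yoff dy i + a, xoff n dx i + c)))"

lemma arrow_blocks_rep: "arrow_blocks n dx dy S \<in> rep n dx dy"
  unfolding rep_def arrow_blocks_def by auto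

lemma MQ_arrow_blocks:
  assumes S: "S \<in> carrier_mat (dimY n dy) (dimX n dx)" and sp: "arrow_supported n dx dy (\<lambda>p q. S $$ (p,q))"
  shows "MQ n dx dy (arrow_blocks n dx dy S) = S"
proof (rule eq_matI)
  fix p q assume "p < dim_row S" "q < dim_col S"
  then have p: "p < dimY n dy" and q: "q < dimX n dx" using S by auto
  obtain k where k: "k \<le> n" "p \<in> yblock dy k" using ex_yblock[OF p] by blast
  obtain i where i: "1 \<le> i" "i \<le> n" "q \<in> xblock n dx i" using ex_xblock[OF q] by blast
  have arrow: "S $$ (p,q) = 0" if "k \<noteq> i - 1" "k \<noteq> i"
  proof (rule ccontr)
    assume "S $$ (p,q) \<noteq> 0"
    then obtain k' i' where ki: "1 \<le> i'" "i' \<le> n" "k' = i' - 1 \<or> k' = i'" "p \<in> yblock dy k'" "q \<in> xblock n dx i'"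
      using sp p q unfolding arrow_supported_def by blast
    have "k' = k" "i' = i" using yblock_unique[OF ki(4) k(2)] xblock_unique[OF ki(5) i(3) ki(1,2) i(1,2)] by auto
    then show False using ki(3) that by simp
  qed
  have "p - yoff dy (i - 1) < dy (i - 1)" if "k = i - 1" using k(2) that by (auto simp: yoff_Suc)
  moreover have "p - yoff dy i < dy i" if "k = i" using k(2) that by (auto simp: yoff_Suc)
  moreover have "q - xoff n dx i < dx i" using i(3) by auto
  ultimately show "MQ n dx dy (arrow_blocks n dx dy S) $$ (p,q) = S $$ (p,q)"
    unfolding MQ_index[OF arrow_blocks_rep k i] using arrow k(2) i(1,3)
    by (auto simp: arrow_blocks_def yoff_Suc)
qed (use S in \<open>simp_all add: MQ_dims\<close>)

lemma col_rank_rect_empty: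
  assumes "arrow_supported n dx dy m" "e \<le> Suc n" "t1 \<le> n"
    and "snd (rect_interval b e t1 t2) < fst (rect_interval b e t1 t2)"
  shows "col_rank m {yoff dy b..<yoff dy e} {xoff n dx t1..<xoff n dx t2} = 0"
  unfolding col_rank_rect[OF assms(1-3)] interval_rows_empty[OF assms(4)]
  using finite_subset[OF interval_cols_subset] by (simp add: col_rank_eq_0_iff)

lemma col_rank_rect_MQ:
  fixes b e t1 t2 :: nat
  assumes V: "V \<in> rep n dx dy" "satisfies n dx dy V r" and e: "e \<le> Suc n" and t1: "t1 \<le> n"
  defines "J \<equiv> rect_interval b e t1 t2"
  shows "col_rank (\<lambda>p q. MQ n dx dy V $$ (p,q)) {yoff dy b..<yoff dy e} {xoff n dx t1..<xoff n dx t2}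
    = (if fst J \<le> snd J then r J else 0)"
proof (cases "fst J \<le> snd J")
  case True
  then have "J \<in> intervals n" using t1 unfolding J_def intervals_def rect_interval_def by auto
  then have "mrank (MJ n dx dy V J) = r J" using V(2) unfolding satisfies_def by blast
  then show ?thesis
    using True col_rank_rect[OF arrow_supported_MQ[OF V(1)] e t1] unfolding mrank_MJ J_def by simp
next
  case False
  then show ?thesis using col_rank_rect_empty[OF arrow_supported_MQ[OF V(1)] e t1] unfolding J_def by simp
qed

lemma corner_rank_MQ_eq:
  assumes "V \<in> rep n dx dy" "satisfies n dx dy V r" "W \<in> rep n dx dy" "satisfies n dx dy W r"
  shows "corner_rank n dx dy (MQ n dx dy V) i j = corner_rank n dx dy (MQ n dx dy W) i j"
  unfolding corner_rank_def col_rank_rect_MQ[OF assms(1,2) row_bounds] col_rank_rect_MQ[OF assms(3,4) row_bounds] ..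

text \<open>An entry of block \<open>(y\<^sub>k, x\<^sub>i)\<close> off the arrows lies in a corner rectangle that meets no arrow:
  below-left of the arrows if \<open>k < i - 1\<close>, above-right of them if \<open>i < k\<close>.\<close>
lemma corner_rect_off_arrows:
  assumes k: "k \<le> n" "p \<in> yblock dy k" and i: "1 \<le> i" "i \<le> n" "q \<in> xblock n dx i"
    and off: "k \<noteq> i - 1" "k \<noteq> i"
  obtains i' j' where "i' \<in> {1..2*n+1}" "j' \<in> {1..2*n+1}"
    "p \<in> {yoff dy (col_ycount n j')..<yoff dy (row_ycount n i')}"
    "q \<in> {xoff n dx (row_xbound n i')..<xoff n dx (col_xbound n j')}"
    "snd (rect_interval (col_ycount n j') (row_ycount n i') (row_xbound n i') (col_xbound n j'))
      < fst (rect_interval (col_ycount n j') (row_ycount n i') (row_xbound n i') (col_xbound n j'))"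
proof (cases "k < i")
  case True
  then have ki: "k + 2 \<le> i" using off by arith
  have "row_ycount n (Suc k) = Suc k" "row_xbound n (Suc k) = n"
    "col_ycount n (n - i + 1) = 0" "col_xbound n (n - i + 1) = i - 1"
    using k i by (auto simp: row_ycount_def row_xbound_def col_ycount_def col_xbound_def)
  moreover have "p \<in> {yoff dy 0..<yoff dy (Suc k)}" using mem_yoff_interval_yblock[OF k(2)] by simp
  moreover have "q \<in> {xoff n dx n..<xoff n dx (i - 1)}"
    using mem_xoff_interval_xblock[OF order_refl i] i by simp
  moreover have "snd (rect_interval 0 (Suc k) n (i - 1)) < fst (rect_interval 0 (Suc k) n (i - 1))"
    using ki unfolding rect_interval_def by simp
  ultimately show ?thesis using that[of "Suc k" "n - i + 1"] k i by simp
next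
  case False
  then have ki: "i + 1 \<le> k" using off by arith
  have "row_ycount n (2*n+1-i) = Suc n" "row_xbound n (2*n+1-i) = i"
    "col_ycount n (n + k) = k" "col_xbound n (n + k) = 0"
    using k i by (auto simp: row_ycount_def row_xbound_def col_ycount_def col_xbound_def)
  moreover have "p \<in> {yoff dy k..<yoff dy (Suc n)}" using mem_yoff_interval_yblock[OF k(2)] k by simp
  moreover have "q \<in> {xoff n dx i..<xoff n dx 0}"
    using mem_xoff_interval_xblock[OF i(2) i] i by simp
  moreover have "snd (rect_interval k (Suc n) i 0) < fst (rect_interval k (Suc n) i 0)"
    using ki unfolding rect_interval_def by simp
  ultimately show ?thesis using that[of "2*n+1-i" "n + k"] k i ki by simp
qed

lemma arrow_supported_if_corner_ranks:
  assumes S: "S \<in> carrier_mat (dimY n dy) (dimX n dx)"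
    and sp0: "arrow_supported n dx dy (\<lambda>p q. S0 $$ (p,q))"
    and corner: "\<forall>i\<in>{1..2*n+1}. \<forall>j\<in>{1..2*n+1}. corner_rank n dx dy S i j = corner_rank n dx dy S0 i j"
  shows "arrow_supported n dx dy (\<lambda>p q. S $$ (p,q))"
  unfolding arrow_supported_def
proof (intro allI impI)
  fix p q assume p: "p < dimY n dy" and q: "q < dimX n dx" and nz: "S $$ (p,q) \<noteq> 0"
  obtain k where k: "k \<le> n" "p \<in> yblock dy k" using ex_yblock[OF p] by blast
  obtain i where i: "1 \<le> i" "i \<le> n" "q \<in> xblock n dx i" using ex_xblock[OF q] by blast
  have "k = i - 1 \<or> k = i"
  proof (rule ccontr)
    assume "\<not> (k = i - 1 \<or> k = i)"
    then obtain i' j' where ij: "i' \<in> {1..2*n+1}" "j' \<in> {1..2*n+1}"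
      and pq: "p \<in> {yoff dy (col_ycount n j')..<yoff dy (row_ycount n i')}"
        "q \<in> {xoff n dx (row_xbound n i')..<xoff n dx (col_xbound n j')}"
      and empty: "snd (rect_interval (col_ycount n j') (row_ycount n i') (row_xbound n i') (col_xbound n j'))
        < fst (rect_interval (col_ycount n j') (row_ycount n i') (row_xbound n i') (col_xbound n j'))"
      using corner_rect_off_arrows[OF k i] by blast
    have "corner_rank n dx dy S0 i' j' = 0"
      unfolding corner_rank_def by (rule col_rank_rect_empty[OF sp0 row_bounds empty])
    then have "corner_rank n dx dy S i' j' = 0" using corner ij by simp
    then show False using nz pq unfolding corner_rank_def by (simp add: col_rank_eq_0_iff)
  qed
  then show "\<exists>k i. 1 \<le> i \<and> i \<le> n \<and> (k = i - 1 \<or> k = i) \<and> p \<in> yblock dy k \<and> q \<in> xblock n dx i"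
    using k i by blast
qed

lemma interval_eq_rect_interval:
  assumes "lo < hi" "hi \<le> 2*n"
  shows "\<exists>i j. 1 \<le> i \<and> i \<le> 2*n+1 \<and> 1 \<le> j \<and> j \<le> 2*n+1 \<and>
     rect_interval (col_ycount n j) (row_ycount n i) (row_xbound n i) (col_xbound n j) = (lo, hi)"
proof -
  obtain h where h: "hi = 2*h \<or> hi = 2*h+1" by (metis oddE evenE)
  obtain l where l: "lo = 2*l \<or> lo = 2*l+1" by (metis oddE evenE)
  show ?thesis
  proof (cases "lo = 2*l")
    case lo: True
    show ?thesis
    proof (cases "hi = 2*h")
      case hi: True
      have "l < h" "h \<le> n" using assms lo hi by auto
      then show ?thesis using lo hi
        by (intro exI[of _ "2*n+1-h"] exI[of _ "n - l"]) (auto simp: row_ycount_def row_xbound_def col_ycount_def col_xbound_def rect_interval_def)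
    next
      case False
      then have hi: "hi = 2*h+1" using h by simp
      have "l \<le> h" "h < n" using assms lo hi by auto
      then show ?thesis using lo hi
        by (intro exI[of _ "h+1"] exI[of _ "n - l"]) (auto simp: row_ycount_def row_xbound_def col_ycount_def col_xbound_def rect_interval_def)
    qed
  next
    case False
    then have lo: "lo = 2*l+1" using l by simp
    show ?thesis
    proof (cases "hi = 2*h")
      case hi: True
      have "l < h" "h \<le> n" using assms lo hi by auto
      then show ?thesis using lo hi
        by (intro exI[of _ "2*n+1-h"] exI[of _ "n + l + 1"]) (auto simp: row_ycount_def row_xbound_def col_ycount_def col_xbound_def rect_interval_def)
    next
      case False
      then have hi: "hi = 2*h+1" using h by simp
      have "l < h" "h < n" using assms lo hi by auto
      then show ?thesis using lo hi
        by (intro exI[of _ "h+1"] exI[of _ "n + l + 1"]) (auto simp: row_ycount_def row_xbound_def col_ycount_def col_xbound_def rect_interval_def)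
    qed
  qed
qed

lemma mrank_MJ_eq_corner_rank:
  assumes "V \<in> rep n dx dy"
    and "rect_interval (col_ycount n j) (row_ycount n i) (row_xbound n i) (col_xbound n j) = J"
  shows "mrank (MJ n dx dy V J) = corner_rank n dx dy (MQ n dx dy V) i j"
  unfolding mrank_MJ corner_rank_def col_rank_rect[OF arrow_supported_MQ[OF assms(1)] row_bounds] assms(2) ..

lemma mrank_MJ_vertex: "mrank (MJ n dx dy V (l, l)) = 0"
proof (cases "even l")
  case True
  then have "interval_cols n dx (l, l) = {}" unfolding interval_cols_def by auto
  then show ?thesis unfolding mrank_MJ by (simp add: col_rank_eq_0_iff)
next
  case False
  then have "interval_rows n dy (l, l) = {}" unfolding interval_rows_def by auto
  then show ?thesis
    unfolding mrank_MJ using finite_subset[OF interval_cols_subset] by (simp add: col_rank_eq_0_iff)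
qed

lemma satisfies_if_corner_ranks:
  assumes V: "V \<in> rep n dx dy" and V0: "V0 \<in> rep n dx dy" "satisfies n dx dy V0 r"
    and corner: "\<forall>i\<in>{1..2*n+1}. \<forall>j\<in>{1..2*n+1}.
      corner_rank n dx dy (MQ n dx dy V) i j = corner_rank n dx dy (MQ n dx dy V0) i j"
  shows "satisfies n dx dy V r"
  unfolding satisfies_def
proof
  fix J assume J: "J \<in> intervals n"
  then obtain lo hi where J_eq: "J = (lo, hi)" "lo \<le> hi" "hi \<le> 2*n" unfolding intervals_def by auto
  have "mrank (MJ n dx dy V J) = mrank (MJ n dx dy V0 J)"
  proof (cases "lo = hi")
    case True
    then show ?thesis unfolding J_eq(1) by (simp add: mrank_MJ_vertex)
  next
    case False
    then obtain i j where "1 \<le> i" "i \<le> 2*n+1" "1 \<le> j" "j \<le> 2*n+1"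
      and ij: "rect_interval (col_ycount n j) (row_ycount n i) (row_xbound n i) (col_xbound n j) = J"
      using interval_eq_rect_interval[of lo hi n] J_eq by auto
    then show ?thesis using corner unfolding mrank_MJ_eq_corner_rank[OF V ij] mrank_MJ_eq_corner_rank[OF V0(1) ij] by simp
  qed
  then show "mrank (MJ n dx dy V J) = r J" using V0(2) J unfolding satisfies_def by simp
qed

lemma corner_ranks_eq_MQ_iff:
  assumes S: "S \<in> carrier_mat (dimY n dy) (dimX n dx)" and V0: "V0 \<in> rep n dx dy" "satisfies n dx dy V0 r"
  shows "(\<forall>i\<in>{1..2*n+1}. \<forall>j\<in>{1..2*n+1}. corner_rank n dx dy S i j = corner_rank n dx dy (MQ n dx dy V0) i j)
    \<longleftrightarrow> (\<exists>V\<in>rep n dx dy. satisfies n dx dy V r \<and> S = MQ n dx dy V)"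
proof
  assume corner: "\<forall>i\<in>{1..2*n+1}. \<forall>j\<in>{1..2*n+1}.
    corner_rank n dx dy S i j = corner_rank n dx dy (MQ n dx dy V0) i j"
  define V where "V = arrow_blocks n dx dy S"
  have "S = MQ n dx dy V"
    unfolding V_def using MQ_arrow_blocks[OF S arrow_supported_if_corner_ranks[OF S arrow_supported_MQ[OF V0(1)] corner]] ..
  moreover have V: "V \<in> rep n dx dy" unfolding V_def by (rule arrow_blocks_rep)
  moreover have "satisfies n dx dy V r"
    using satisfies_if_corner_ranks[OF V V0] corner \<open>S = MQ n dx dy V\<close> by simp
  ultimately show "\<exists>V\<in>rep n dx dy. satisfies n dx dy V r \<and> S = MQ n dx dy V" by blast
next
  assume "\<exists>V\<in>rep n dx dy. satisfies n dx dy V r \<and> S = MQ n dx dy V"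
  then show "\<forall>i\<in>{1..2*n+1}. \<forall>j\<in>{1..2*n+1}. corner_rank n dx dy S i j = corner_rank n dx dy (MQ n dx dy V0) i j"
    using corner_rank_MQ_eq[OF _ _ V0] by auto
qed

theorem proposition4p4:
  fixes n :: nat and dx dy :: "nat \<Rightarrow> nat" and r :: "nat \<times> nat \<Rightarrow> nat"
    and Z :: "'a::field mat"
  assumes "is_quiver_rank_array TYPE('a) n dx dy r"
    and "Z \<in> Yw n dx dy"
  shows "(\<forall>i\<in>{1..2*n+1}. \<forall>j\<in>{1..2*n+1}. mrank (topleft n dx dy Z i j) = bmat TYPE('a) n dx dy r i j)
         \<longleftrightarrow> (\<exists>V\<in>rep n dx dy. satisfies n dx dy V r \<and> Z = zeta n dx dy V)"
proof -
  let ?Y = "dimY n dy" and ?X = "dimX n dx"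
  define V0 where "V0 = (SOME V::'a qrep. V \<in> orbit_r n dx dy r)"
  have "V0 \<in> orbit_r n dx dy r"
    using assms(1) unfolding is_quiver_rank_array_def V0_def by (rule someI_ex)
  then have V0: "V0 \<in> rep n dx dy" "satisfies n dx dy V0 r" unfolding orbit_r_def by auto
  obtain S where S: "S \<in> carrier_mat ?Y ?X" and Z: "Z = ymat S ?Y ?X"
    using assms(2) unfolding Yw_def ymat_def by blast
  have "bmat TYPE('a) n dx dy r i j = mrank (topleft n dx dy (ymat (MQ n dx dy V0) ?Y ?X) i j)" for i j
    unfolding bmat_def V0_def[symmetric] zeta_eq_ymat ..
  then have "(\<forall>i\<in>{1..2*n+1}. \<forall>j\<in>{1..2*n+1}. mrank (topleft n dx dy Z i j) = bmat TYPE('a) n dx dy r i j)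
      \<longleftrightarrow> (\<exists>V\<in>rep n dx dy. satisfies n dx dy V r \<and> S = MQ n dx dy V)"
    unfolding Z corner_ranks_eq_MQ_iff[OF S V0, symmetric]
    using mrank_topleft_ymat_eq_iff[OF S MQ_carrier] by auto
  also have "\<dots> \<longleftrightarrow> (\<exists>V\<in>rep n dx dy. satisfies n dx dy V r \<and> Z = zeta n dx dy V)"
    unfolding Z zeta_eq_ymat using ymat_inj[OF S MQ_carrier] by auto
  finally show ?thesis .
qed

end
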